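(* Let $(X_t)_{t\in\mathbb{Z}}$ satisfy the weak FARIMA$(p,d_0,q)$ equation $a(L)(1-L)^{d_0}X_t=b(L)\epsilon_t$. Then for each $n$ there is a random variable $\Delta_n$, with $(\Delta_n)_{n\ge1}$ bounded in probability, such that for all $i,j\in\{1,\dots,p+q+1\}$ and all $\theta^{(1)},\theta^{(2)}\in\Theta_\kappa$, $$\Big|\frac{\partial^2}{\partial\theta_i\partial\theta_j}Q_n(\theta^{(1)})-\frac{\partial^2}{\partial\theta_i\partial\theta_j}Q_n(\theta^{(2)})\Big|\le\Delta_n\|\theta^{(1)}-\theta^{(2)}\|.$$
   Context: Model: $L$ is the backshift operator, $d_0\in(0,1/2)$, $(\epsilon_t)_{t\in\mathbb Z}$ is a sequence of uncorrelated random variables with mean $0$ and common variance $\sigma_\epsilon^2>0$, $(X_t)$ is second-order stationary, $a(L)=1-\sum_{i=1}^p a_iL^i$, $b(L)=1-\sum_{i=1}^q b_iL^i$ have all roots outside the closed unit disk and no common root; $(1-L)^{d}=\sum_{j\ge0}\alpha_j(d)L^j$ with $\alpha_j(d)=\Gamma(j-d)/\{\Gamma(j+1)\Gamma(-d)\}$. For $\theta=(\theta_1,\dots,\theta_{p+q},d)$: $a_\theta(z)=1-\sum_{i=1}^p\theta_iz^i$, $b_\theta(z)=1-\sum_{j=1}^q\theta_{p+j}z^j$. For $\kappa>0$, $\Theta^*_\kappa$ is the set of $(\theta_1,\dots,\theta_{p+q})$ such that all roots of $a_\theta,b_\theta$ have modulus $\ge1+\kappa$; $\Theta_\kappa=\Theta^*_\kappa\times[d_1,d_2]$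 with $[d_1,d_2]\subset(0,1/2)$. $(\gamma_i(\theta))_{i\ge0}$ are the power-series coefficients of $b_\theta^{-1}(z)a_\theta(z)(1-z)^d$; truncated residuals $\tilde\epsilon_t(\theta)=\sum_{i=0}^{t-1}\gamma_i(\theta)X_{t-i}$ for $1\le t\le n$; $Q_n(\theta)=\frac1n\sum_{t=1}^n\tilde\epsilon_t^2(\theta)$. *)

theory Defs
  imports "HOL-Probability.Probability" "HOL-Computational_Algebra.Formal_Power_Series"
begin

text \<open>Coefficients of the fractional difference operator (1-L)^d.\<close>
definition frac_alpha :: "nat \<Rightarrow> real \<Rightarrow> real" where
  "frac_alpha j d = Gamma (real j - d) / (Gamma (real j + 1) * Gamma (- d))"

definition lag_poly :: "nat \<Rightarrow> (nat \<Rightarrow> real) \<Rightarrow> complex \<Rightarrow> complex" where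
  "lag_poly p c z = 1 - (\<Sum>i=1..p. complex_of_real (c i) * z ^ i)"

text \<open>Parameters theta are functions nat => real; theta_1..theta_p are the AR
  coefficients, theta_{p+1}..theta_{p+q} the MA coefficients, theta_{p+q+1} = d.\<close>
definition a_theta_fps :: "nat \<Rightarrow> (nat \<Rightarrow> real) \<Rightarrow> real fps" where
  "a_theta_fps p \<theta> = Abs_fps (\<lambda>i. if i = 0 then 1 else if i \<le> p then - \<theta> i else 0)"

definition b_theta_fps :: "nat \<Rightarrow> nat \<Rightarrow> (nat \<Rightarrow> real) \<Rightarrow> real fps" where
  "b_theta_fps p q \<theta> = Abs_fps (\<lambda>j. if j = 0 then 1 else if j \<le> q then - \<theta> (p + j) else 0)"

definition frac_fps :: "real \<Rightarrow> real fps" where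
  "frac_fps d = Abs_fps (\<lambda>j. frac_alpha j d)"

definition gamma_coef :: "nat \<Rightarrow> nat \<Rightarrow> (nat \<Rightarrow> real) \<Rightarrow> nat \<Rightarrow> real" where
  "gamma_coef p q \<theta> i =
     fps_nth (inverse (b_theta_fps p q \<theta>) * a_theta_fps p \<theta> * frac_fps (\<theta> (p + q + 1))) i"

definition eps_tilde :: "nat \<Rightarrow> nat \<Rightarrow> (int \<Rightarrow> 'a \<Rightarrow> real) \<Rightarrow> (nat \<Rightarrow> real) \<Rightarrow> nat \<Rightarrow> 'a \<Rightarrow> real" where
  "eps_tilde p q X \<theta> t \<omega> = (\<Sum>i=0..<t. gamma_coef p q \<theta> i * X (int t - int i) \<omega>)"

definition Q_n :: "nat \<Rightarrow> nat \<Rightarrow> (int \<Rightarrow> 'a \<Rightarrow> real) \<Rightarrow> nat \<Rightarrow> (nat \<Rightarrow> real) \<Rightarrow> 'a \<Rightarrow> real" where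
  "Q_n p q X n \<theta> \<omega> = (1 / real n) * (\<Sum>t=1..n. (eps_tilde p q X \<theta> t \<omega>)\<^sup>2)"

text \<open>The parameter set Theta_kappa, as a subset of R^{p+q+1} (coordinates 1..p+q+1;
  the unused coordinates are set to 0).\<close>
definition Theta_kappa :: "nat \<Rightarrow> nat \<Rightarrow> real \<Rightarrow> real \<Rightarrow> real \<Rightarrow> (nat \<Rightarrow> real) set" where
  "Theta_kappa p q \<kappa> d1 d2 =
     {\<theta>. (\<forall>i. i \<notin> {1..p+q+1} \<longrightarrow> \<theta> i = 0)
         \<and> (\<forall>z. lag_poly p \<theta> z = 0 \<longrightarrow> cmod z \<ge> 1 + \<kappa>)
         \<and> (\<forall>z. lag_poly q (\<lambda>j. \<theta> (p + j)) z = 0 \<longrightarrow> cmod z \<ge> 1 + \<kappa>)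
         \<and> \<theta> (p + q + 1) \<in> {d1..d2}}"

definition partial :: "nat \<Rightarrow> ((nat \<Rightarrow> real) \<Rightarrow> real) \<Rightarrow> (nat \<Rightarrow> real) \<Rightarrow> real" where
  "partial i f \<theta> = deriv (\<lambda>h. f (\<theta>(i := h))) (\<theta> i)"

definition param_norm :: "nat \<Rightarrow> (nat \<Rightarrow> real) \<Rightarrow> real" where
  "param_norm m \<theta> = sqrt (\<Sum>i=1..m. (\<theta> i)\<^sup>2)"

definition bounded_in_probability :: "'a measure \<Rightarrow> (nat \<Rightarrow> 'a \<Rightarrow> real) \<Rightarrow> bool" where
  "bounded_in_probability M Y \<longleftrightarrow>
     (\<forall>e>0. \<exists>K. \<forall>n\<ge>1. measure M {\<omega>\<in>space M. \<bar>Y n \<omega>\<bar> > K} < e)"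

definition frac_diff :: "real \<Rightarrow> (int \<Rightarrow> 'a \<Rightarrow> real) \<Rightarrow> int \<Rightarrow> 'a \<Rightarrow> real" where
  "frac_diff d X t \<omega> = (\<Sum>j. frac_alpha j d * X (t - int j) \<omega>)"

end

theory Submission
  imports Defs "HOL-Complex_Analysis.Complex_Analysis" "HOL-Computational_Algebra.Polynomial_FPS"
    "HOL-Computational_Algebra.Fundamental_Theorem_Algebra" "HOL-Analysis.Harmonic_Numbers"
begin

text \<open>
  The residual coefficients \<open>\<gamma>\<^sub>s(\<theta>)\<close> are the coefficients of \<open>b\<^sub>\<theta>\<^sup>-\<^sup>1 a\<^sub>\<theta> (1-z)\<^sup>d\<close>.
  Each factor, and each of its first and second partial derivatives in \<open>\<theta>\<close>, has its
  \<open>s\<close>-th coefficient bounded by \<open>U s\<close> and Lipschitz in \<open>\<theta>\<close> with constant \<open>U s\<close>, uniformly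
  on \<open>\<Theta>\<^sub>\<kappa>\<close>, for one summable sequence \<open>U\<close>: for \<open>b\<^sub>\<theta>\<^sup>-\<^sup>1\<close> because its roots lie outside the
  disk of radius \<open>1 + \<kappa>\<close>, so that it is dominated by \<open>(1 - z/(1+\<kappa>))\<^sup>-\<^sup>q\<close>; for \<open>(1-z)\<^sup>d\<close>
  because its \<open>m\<close>-th coefficient is a polynomial in \<open>d\<close> of size \<open>O(m powr (-1 - d\<^sub>1/2))\<close>
  on a complex neighbourhood of \<open>[d\<^sub>1, 1/2]\<close>, so that Cauchy's estimate bounds its
  \<open>d\<close>-derivatives. These properties survive sums and products, since Cauchy products of
  summable sequences are summable. The second partial derivatives of \<open>Q\<^sub>n\<close> are averages
  over \<open>t\<close> of products of two truncated filters \<open>\<Sum>\<^sub>s\<^sub><\<^sub>t c\<^sub>s X\<^sub>t\<^sub>-\<^sub>s\<close>, so by Cauchy--Schwarz their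
  increments are at most \<open>\<Delta>\<^sub>n \<parallel>\<theta>\<^sub>1 - \<theta>\<^sub>2\<parallel>\<close> with
  \<open>\<Delta>\<^sub>n = 8 (\<Sum>U) / n \<cdot> \<Sum>\<^sub>t\<^sub>\<le>\<^sub>n \<Sum>\<^sub>s\<^sub><\<^sub>t U s X\<^sub>t\<^sub>-\<^sub>s\<^sup>2\<close>. As \<open>E X\<^sub>t\<^sup>2\<close> does not depend on \<open>t\<close>, the
  expectations of \<open>\<Delta>\<^sub>n\<close> are bounded, and Markov's inequality gives boundedness in
  probability.
\<close>

no_notation vec_nth (infixl \<open>$\<close> 90)

section \<open>Nonnegative summable sequences\<close>

definition nonneg_summable :: "(nat \<Rightarrow> real) \<Rightarrow> bool" where
  "nonneg_summable U \<longleftrightarrow> (\<forall>n. 0 \<le> U n) \<and> summable U"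

lemma fps_mult_nth_norm_le:
  fixes f g :: "'a::real_normed_div_algebra fps"
  assumes "\<And>k. norm (f $ k) \<le> U k" "\<And>k. norm (g $ k) \<le> V k"
  shows "norm ((f * g) $ n) \<le> (Abs_fps U * Abs_fps V) $ n"
proof -
  have "norm ((f * g) $ n) \<le> (\<Sum>i=0..n. norm (f $ i * g $ (n - i)))"
    unfolding fps_mult_nth by (rule norm_sum)
  also have "\<dots> \<le> (\<Sum>i=0..n. U i * V (n - i))"
    by (intro sum_mono) (simp add: norm_mult mult_mono' assms)
  finally show ?thesis by (simp add: fps_mult_nth)
qed

lemma nonneg_summable_mult:
  assumes "nonneg_summable U" "nonneg_summable V"
  shows "nonneg_summable (\<lambda>n. (Abs_fps U * Abs_fps V) $ n)"
proof -
  have "(\<lambda>k. \<Sum>i\<le>k. U i * V (k - i)) sums ((\<Sum>k. U k) * (\<Sum>k. V k))"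
    using assms by (intro Cauchy_product_sums) (auto simp: nonneg_summable_def)
  moreover have "(\<lambda>k. \<Sum>i\<le>k. U i * V (k - i)) = (\<lambda>n. (Abs_fps U * Abs_fps V) $ n)"
    by (auto simp: fps_mult_nth atLeast0AtMost)
  ultimately show ?thesis using assms
    by (auto simp: nonneg_summable_def fps_mult_nth sums_summable intro!: sum_nonneg)
qed

lemma nonneg_summable_add:
  "nonneg_summable U \<Longrightarrow> nonneg_summable V \<Longrightarrow> nonneg_summable (\<lambda>n. U n + V n)"
  by (auto simp: nonneg_summable_def intro: summable_add)

lemma nonneg_summable_cmult:
  "nonneg_summable U \<Longrightarrow> 0 \<le> c \<Longrightarrow> nonneg_summable (\<lambda>n. c * U n)"
  by (auto simp: nonneg_summable_def intro: summable_mult)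

lemma nonneg_summable_finite_support:
  "(\<And>n. n > K \<Longrightarrow> U n = 0) \<Longrightarrow> (\<And>n. 0 \<le> U n) \<Longrightarrow> nonneg_summable U"
  unfolding nonneg_summable_def
  by (auto intro!: summable_finite[of "{..K}"] simp: not_le[symmetric])

lemma nonneg_summable_sum:
  "finite I \<Longrightarrow> (\<And>i. i \<in> I \<Longrightarrow> nonneg_summable (U i)) \<Longrightarrow> nonneg_summable (\<lambda>n. \<Sum>i\<in>I. U i n)"
  by (induction I rule: finite_induct)
    (auto simp: nonneg_summable_def intro!: summable_add sum_nonneg)

section \<open>The coefficients of \<open>(1-z)\<^sup>d\<close> as polynomials in \<open>d\<close>\<close>

definition frac_coeff_poly :: "nat \<Rightarrow> real poly" where
  "frac_coeff_poly m = smult (1 / fact m) (\<Prod>k<m. [:of_nat k, -1:])"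

definition frac_coeff_cpoly :: "nat \<Rightarrow> complex poly" where
  "frac_coeff_cpoly m = map_poly of_real (frac_coeff_poly m)"

lemma frac_alpha_eq_poly:
  assumes "0 < d" "d < 1"
  shows "frac_alpha m d = poly (frac_coeff_poly m) d"
proof -
  have "- d \<notin> \<int>\<^sub>\<le>\<^sub>0"
  proof
    assume "- d \<in> \<int>\<^sub>\<le>\<^sub>0"
    then obtain k :: int where "- d = of_int k" "k \<le> 0" by (auto elim!: nonpos_Ints_cases)
    with assms show False by (cases "k = 0") auto
  qed
  hence "pochhammer (- d) m = Gamma (- d + of_nat m) / Gamma (- d)"
    by (rule pochhammer_Gamma)
  moreover have "poly (frac_coeff_poly m) d = pochhammer (- d) m / fact m"
    by (simp add: frac_coeff_poly_def poly_prod pochhammer_prod atLeast0LessThan)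
  moreover have "Gamma (real m + 1) = fact m" by (metis Gamma_fact add.commute)
  ultimately show ?thesis by (simp add: frac_alpha_def add.commute)
qed

lemma map_poly_of_real_mult:
  "map_poly (of_real :: real \<Rightarrow> complex) (p * q) = map_poly of_real p * map_poly of_real q"
  by (intro poly_eqI) (simp add: coeff_mult coeff_map_poly of_real_sum)

lemma poly_frac_coeff_cpoly: "poly (frac_coeff_cpoly m) w = (\<Prod>k<m. (of_nat k - w)) / fact m"
proof -
  have "map_poly of_real (\<Prod>k<m. [:of_nat k, -1::real:]) = (\<Prod>k<m. [:of_nat k, -1::complex:])"
  proof (induction m)
    case (Suc m)
    have "map_poly (of_real :: real \<Rightarrow> complex) [:of_nat m, -1:] = [:of_nat m, -1:]"
      by (simp add: map_poly_pCons)
    thus ?case by (simp only: prod.lessThan_Suc map_poly_of_real_mult Suc.IH)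
  qed simp
  hence "frac_coeff_cpoly m = smult (1 / fact m) (\<Prod>k<m. [:of_nat k, -1:])"
    unfolding frac_coeff_cpoly_def frac_coeff_poly_def by (subst map_poly_smult) simp_all
  thus ?thesis by (simp add: poly_prod)
qed

lemma poly_higher_pderiv_frac_coeff_cpoly:
  "poly ((pderiv ^^ k) (frac_coeff_cpoly m)) (of_real x)
     = of_real (poly ((pderiv ^^ k) (frac_coeff_poly m)) x)"
proof -
  have pderiv_map: "pderiv (map_poly of_real p) = (map_poly of_real (pderiv p) :: complex poly)"
    for p :: "real poly"
    by (intro poly_eqI) (simp add: coeff_pderiv coeff_map_poly)
  have "(pderiv ^^ k) (frac_coeff_cpoly m) = map_poly of_real ((pderiv ^^ k) (frac_coeff_poly m))"
    by (induction k) (simp_all add: frac_coeff_cpoly_def pderiv_map)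
  thus ?thesis by (simp add: poly_altdef degree_map_poly coeff_map_poly)
qed

lemma higher_deriv_poly: "(deriv ^^ k) (poly (P :: complex poly)) = poly ((pderiv ^^ k) P)"
proof (induction k)
  case (Suc k)
  show ?case by (simp add: Suc) (intro ext DERIV_imp_deriv poly_DERIV)
qed simp

text \<open>Passing from \<open>m\<close> to \<open>m + 1\<close> multiplies by \<open>|m - w| / (m + 1)\<close>, and
  \<open>|m - w| \<le> m - \<delta> \<le> m exp (-\<delta>/m)\<close>.\<close>
lemma norm_frac_coeff_cpoly_le_exp_harm:
  assumes "m \<ge> 1" "0 < \<delta>" "cmod w \<le> 1" "Re w - \<bar>Im w\<bar> \<ge> \<delta>"
  shows "cmod (poly (frac_coeff_cpoly m) w) \<le> exp (- \<delta> * harm (m - 1)) / real m"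
  using assms(1)
proof (induction m rule: dec_induct)
  case base
  show ?case using assms by (simp add: poly_frac_coeff_cpoly harm_expand)
next
  case (step m)
  have "Re w \<le> 1" using assms(3) abs_Re_le_cmod[of w] by linarith
  have "cmod (of_nat m - w) \<le> \<bar>Re (of_nat m - w)\<bar> + \<bar>Im (of_nat m - w)\<bar>" by (rule cmod_le)
  also have "\<dots> \<le> real m - \<delta>" using \<open>Re w \<le> 1\<close> step(1) assms(4) by simp
  finally have factor: "cmod (of_nat m - w) \<le> real m - \<delta>" .
  define H where "H = (harm (m - 1) :: real)"
  have harm_m: "harm m = H + 1 / real m"
    using step(1) by (cases m) (simp_all add: H_def harm_Suc field_simps)
  have "cmod (poly (frac_coeff_cpoly (Suc m)) w)
          = cmod (poly (frac_coeff_cpoly m) w) * cmod (of_nat m - w) / real (Suc m)"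
  proof -
    have "poly (frac_coeff_cpoly (Suc m)) w
            = poly (frac_coeff_cpoly m) w * (of_nat m - w) / of_nat (Suc m)"
      by (simp add: poly_frac_coeff_cpoly field_simps)
    thus ?thesis by (simp only: norm_mult norm_divide norm_of_nat)
  qed
  also have "\<dots> \<le> exp (- \<delta> * H) / real m * (real m - \<delta>) / real (Suc m)"
    using step(3) factor by (intro divide_right_mono mult_mono) (auto simp: H_def)
  also have "\<dots> \<le> exp (- \<delta> * H) * exp (- \<delta> / real m) / real (Suc m)"
  proof -
    have "(real m - \<delta>) / real m \<le> exp (- \<delta> / real m)"
      using exp_ge_add_one_self[of "- \<delta> / real m"] step(1) by (simp add: field_simps)
    hence "exp (- \<delta> * H) * ((real m - \<delta>) / real m) \<le> exp (- \<delta> * H) * exp (- \<delta> / real m)"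
      by (intro mult_left_mono) auto
    thus ?thesis by (intro divide_right_mono) (auto simp: field_simps)
  qed
  also have "\<dots> = exp (- \<delta> * harm (Suc m - 1)) / real (Suc m)"
    by (simp add: harm_m exp_add[symmetric] algebra_simps)
  finally show ?case .
qed

lemma norm_frac_coeff_cpoly_le_powr:
  assumes "m \<ge> 1" "0 < \<delta>" "cmod w \<le> 1" "Re w - \<bar>Im w\<bar> \<ge> \<delta>"
  shows "cmod (poly (frac_coeff_cpoly m) w) \<le> real m powr (-1 - \<delta>)"
proof -
  have "ln (real m) \<le> harm (m - 1)"
    using ln_le_harm[of "m - 1"] assms(1) by (simp add: of_nat_diff)
  hence "exp (- \<delta> * harm (m - 1)) \<le> exp (- \<delta> * ln (real m))" using assms(2) by simp
  also have "\<dots> = real m powr (- \<delta>)" using assms(1) by (simp add: powr_def)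
  finally have "exp (- \<delta> * harm (m - 1)) / real m \<le> real m powr (- \<delta>) / real m"
    by (intro divide_right_mono) auto
  also have "\<dots> = real m powr (-1 - \<delta>)"
    using assms(1) by (simp add: powr_diff powr_minus divide_inverse powr_add)
  finally show ?thesis using norm_frac_coeff_cpoly_le_exp_harm[OF assms] by linarith
qed

text \<open>Cauchy's estimate on the disk of radius \<open>d\<^sub>1/4\<close> around \<open>x\<close>, on which
  \<open>Re w - |Im w| \<ge> d\<^sub>1/2\<close>.\<close>
lemma higher_pderiv_frac_coeff_poly_bound:
  assumes "m \<ge> 1" "0 < d1" "d1 \<le> x" "x \<le> 1/2"
  shows "\<bar>poly ((pderiv ^^ k) (frac_coeff_poly m)) x\<bar>
           \<le> fact k * (2 * real m powr (-1 - d1/2)) / (d1/4) ^ k"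
proof -
  define b where "b = real m powr (-1 - d1/2)"
  have "b > 0" using assms by (simp add: b_def)
  have on_disk: "cmod (poly (frac_coeff_cpoly m) w) < 2 * b" if "w \<in> ball (of_real x) (d1/4)" for w
  proof -
    have d: "cmod (w - of_real x) < d1/4" using that by (simp add: dist_norm norm_minus_commute)
    have "\<bar>Re w - x\<bar> < d1/4" using d abs_Re_le_cmod[of "w - of_real x"] by simp
    moreover have "\<bar>Im w\<bar> < d1/4" using d abs_Im_le_cmod[of "w - of_real x"] by simp
    ultimately have "Re w - \<bar>Im w\<bar> \<ge> d1/2" using assms by linarith
    moreover have "cmod w \<le> 1"
      using d assms norm_triangle_sub[of w "of_real x"] by (simp add: add.commute)
    ultimately have "cmod (poly (frac_coeff_cpoly m) w) \<le> b"
      unfolding b_def using assms by (intro norm_frac_coeff_cpoly_le_powr) auto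
    thus ?thesis using \<open>b > 0\<close> by linarith
  qed
  have eq: "\<bar>poly ((pderiv ^^ k) (frac_coeff_poly m)) x\<bar>
              = cmod ((deriv ^^ k) (poly (frac_coeff_cpoly m)) (of_real x))"
    by (simp add: higher_deriv_poly poly_higher_pderiv_frac_coeff_cpoly)
  show ?thesis
  proof (cases "k = 0")
    case True
    thus ?thesis using eq on_disk[of "of_real x"] assms by (simp add: b_def)
  next
    case False
    have "cmod ((deriv ^^ k) (poly (frac_coeff_cpoly m)) (of_real x))
            \<le> fact k * (2 * b) / (d1/4) ^ k"
      by (rule Cauchy_higher_deriv_bound[where y = 0])
        (use assms False on_disk in \<open>auto intro!: holomorphic_intros continuous_intros\<close>)
    thus ?thesis using eq by (simp add: b_def)
  qed
qed

text \<open>Cauchy's bound times \<open>3!/(d\<^sub>1/4)\<^sup>3\<close> dominates the first three \<open>d\<close>-derivatives of the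
  coefficients \<open>m \<ge> 1\<close>; the coefficient \<open>m = 0\<close> is the constant \<open>1\<close>.\<close>
definition frac_majorant :: "real \<Rightarrow> nat \<Rightarrow> real" where
  "frac_majorant d1 m = 12 / (d1/4)^3 * real m powr (-1 - d1/2) + (if m = 0 then 1 else 0)"

lemma nonneg_summable_frac_majorant:
  assumes "0 < d1"
  shows "nonneg_summable (frac_majorant d1)"
proof -
  have "nonneg_summable (\<lambda>m. 12 / (d1/4)^3 * real m powr (-1 - d1/2))"
    using assms summable_real_powr_iff[of "-1 - d1/2"]
    by (intro nonneg_summable_cmult) (auto simp: nonneg_summable_def)
  moreover have "nonneg_summable (\<lambda>m::nat. if m = 0 then 1 else (0::real))"
    by (rule nonneg_summable_finite_support[of 0]) auto
  ultimately show ?thesis unfolding frac_majorant_def[abs_def] by (rule nonneg_summable_add)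
qed

lemma higher_pderiv_frac_coeff_poly_le_majorant:
  assumes "0 < d1" "d1 \<le> x" "x \<le> 1/2" "k \<le> 3"
  shows "\<bar>poly ((pderiv ^^ k) (frac_coeff_poly m)) x\<bar> \<le> frac_majorant d1 m"
proof (cases "m = 0")
  case True
  have "(pderiv ^^ k) (1 :: real poly) = (if k = 0 then 1 else 0)" by (induction k) auto
  hence "\<bar>poly ((pderiv ^^ k) (frac_coeff_poly 0)) x\<bar> \<le> 1"
    by (simp add: frac_coeff_poly_def pCons_one)
  thus ?thesis using True by (simp add: frac_majorant_def)
next
  case False
  define r where "r = d1 / 4"
  have r: "0 < r" "r \<le> 1" using assms by (auto simp: r_def)
  have "fact k \<le> (fact 3 :: real)" using assms(4) by (intro fact_mono) auto
  hence fact_k: "fact k \<le> (6::real)" by (simp add: fact_numeral)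
  have "\<bar>poly ((pderiv ^^ k) (frac_coeff_poly m)) x\<bar>
          \<le> fact k * (2 * real m powr (-1 - d1/2)) / r ^ k"
    using higher_pderiv_frac_coeff_poly_bound[of m d1 x k] False assms by (simp add: r_def)
  also have "\<dots> \<le> 6 * (2 * real m powr (-1 - d1/2)) / r ^ 3"
    using r assms(4) fact_k by (intro frac_le mult_right_mono power_decreasing) auto
  finally show ?thesis using False by (simp add: frac_majorant_def r_def)
qed

lemma poly_lipschitz_on_interval:
  fixes P :: "real poly"
  assumes "\<And>z. z \<in> {a..b} \<Longrightarrow> \<bar>poly (pderiv P) z\<bar> \<le> L" "x \<in> {a..b}" "y \<in> {a..b}"
  shows "\<bar>poly P x - poly P y\<bar> \<le> L * \<bar>x - y\<bar>"
proof -
  have main: "\<bar>poly P v - poly P u\<bar> \<le> L * \<bar>v - u\<bar>" if "u < v" "u \<in> {a..b}" "v \<in> {a..b}" for u v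
  proof -
    obtain z where z: "u < z" "z < v" "poly P v - poly P u = (v - u) * poly (pderiv P) z"
      using MVT2[OF \<open>u < v\<close>, of "poly P" "poly (pderiv P)"] by auto
    have "\<bar>poly (pderiv P) z\<bar> \<le> L" using z that by (intro assms(1)) auto
    thus ?thesis using z that by (simp add: abs_mult mult.commute mult_left_mono)
  qed
  show ?thesis
  proof (cases x y rule: linorder_cases)
    case less thus ?thesis using main[of x y] assms by (simp add: abs_minus_commute)
  next
    case greater thus ?thesis using main[of y x] assms by (simp add: abs_minus_commute)
  qed simp
qed

section \<open>Lag polynomials with roots outside a disk\<close>

definition lag_polynomial :: "nat \<Rightarrow> (nat \<Rightarrow> real) \<Rightarrow> complex poly" where
  "lag_polynomial n c = 1 - (\<Sum>i=1..n. monom (of_real (c i)) i)"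

lemma poly_lag_polynomial: "poly (lag_polynomial n c) z = lag_poly n c z"
  by (simp add: lag_polynomial_def lag_poly_def poly_sum poly_monom)

lemma coeff_lag_polynomial:
  "coeff (lag_polynomial n c) k = (if k = 0 then 1 else if k \<le> n then - of_real (c k) else 0)"
proof -
  have "coeff (\<Sum>i=1..n. monom (complex_of_real (c i)) i) k
          = (\<Sum>i=1..n. if i = k then of_real (c i) else 0)"
    by (simp add: coeff_sum coeff_monom)
  also have "\<dots> = (if 1 \<le> k \<and> k \<le> n then of_real (c k) else 0)"
    by (subst sum.delta) auto
  finally show ?thesis by (auto simp: lag_polynomial_def coeff_diff)
qed

lemma degree_lag_polynomial: "degree (lag_polynomial n c) \<le> n"
  by (rule degree_le) (simp add: coeff_lag_polynomial)

lemma prod_mset_linear_factors_eq_smult: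
  assumes "0 \<notin># Z"
  shows "(\<Prod>x\<in>#Z. [:-x, 1:]) = smult (\<Prod>x\<in>#Z. -x) (\<Prod>x\<in>#Z. [:1, - 1/x:] :: complex poly)"
  using assms
proof (induction Z)
  case (add x Z)
  hence x: "[:-x, 1:] = smult (-x) [:1, -1/x:]" by auto
  have "(\<Prod>y\<in>#add_mset x Z. [:-y, 1:]) = [:-x, 1:] * (\<Prod>y\<in>#Z. [:-y, 1:])"
    by (simp only: image_mset_add_mset prod_mset.add_mset)
  also have "\<dots> = smult (-x) [:1, -1/x:] * smult (\<Prod>y\<in>#Z. -y) (\<Prod>y\<in>#Z. [:1, - 1/y:])"
    using add by (simp only: x) simp
  also have "\<dots> = smult ((-x) * (\<Prod>y\<in>#Z. -y)) ([:1, -1/x:] * (\<Prod>y\<in>#Z. [:1, - 1/y:]))"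
    by (simp only: mult_smult_left mult_smult_right smult_smult mult.commute)
  also have "\<dots> = smult (\<Prod>y\<in>#add_mset x Z. -y) (\<Prod>y\<in>#add_mset x Z. [:1, - 1/y:])"
    by (simp only: image_mset_add_mset prod_mset.add_mset)
  finally show ?case .
qed simp

lemma poly_eq_prod_mset_inverse_roots:
  fixes P :: "complex poly"
  assumes "coeff P 0 = 1"
  shows "P = (\<Prod>x\<in>#proots P. [:1, - 1/x:])"
proof -
  have "P \<noteq> 0" using assms by auto
  have "0 \<notin># proots P"
  proof
    assume "0 \<in># proots P"
    hence "poly P 0 = 0" using \<open>P \<noteq> 0\<close> by simp
    thus False using assms by (simp add: poly_0_coeff_0)
  qed
  define Q where "Q = (\<Prod>x\<in>#proots P. [:1, - 1/x:])"
  have "P = smult (lead_coeff P) (\<Prod>x\<in>#proots P. [:-x, 1:])"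
    by (rule complex_poly_decompose_multiset[symmetric])
  also have "\<dots> = smult (lead_coeff P * (\<Prod>x\<in>#proots P. -x)) Q"
    by (simp add: prod_mset_linear_factors_eq_smult[OF \<open>0 \<notin># proots P\<close>] Q_def)
  finally have PQ: "P = smult (lead_coeff P * (\<Prod>x\<in>#proots P. -x)) Q" .
  have "coeff Q 0 = 1" by (simp add: Q_def poly_0_coeff_0[symmetric] poly_prod_mset)
  hence "lead_coeff P * (\<Prod>x\<in>#proots P. -x) = 1"
    using arg_cong[OF PQ, of "\<lambda>p. coeff p 0"] assms by simp
  with PQ show ?thesis by (simp add: Q_def)
qed

lemma norm_coeff_prod_mset_inverse_roots_le:
  assumes "\<And>x. x \<in># Z \<Longrightarrow> cmod x \<ge> 1"
  shows "cmod (coeff (\<Prod>x\<in>#Z. [:1, - 1/x:]) k) \<le> 2 ^ size Z"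
  using assms
proof (induction Z arbitrary: k)
  case empty
  then show ?case by (cases k) auto
next
  case (add x Z)
  define Q where "Q = (\<Prod>x\<in>#Z. [:1, - 1/x:])"
  have IH: "cmod (coeff Q k) \<le> 2 ^ size Z" for k using add by (auto simp: Q_def)
  have "cmod (- 1/x) \<le> 1" using add.prems[of x] by (simp add: norm_divide divide_le_eq_1)
  hence "cmod ((- 1/x) * coeff Q (k - 1)) \<le> 1 * 2 ^ size Z"
    unfolding norm_mult by (intro mult_mono IH) auto
  hence shifted: "cmod (if k = 0 then 0 else (- 1/x) * coeff Q (k - 1)) \<le> 2 ^ size Z"
    by auto
  have "coeff ([:1, - 1/x:] * Q) k = coeff Q k + (if k = 0 then 0 else (- 1/x) * coeff Q (k - 1))"
    by (cases k) (auto simp: mult_pCons_left)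
  also have "cmod \<dots> \<le> 2 ^ size Z + 2 ^ size Z"
    by (rule order_trans[OF norm_triangle_ineq add_mono[OF IH shifted]])
  finally show ?case by (simp add: Q_def)
qed

lemma lag_poly_coeff_bound:
  assumes "\<And>z. lag_poly n c z = 0 \<Longrightarrow> cmod z \<ge> 1" "1 \<le> k" "k \<le> n"
  shows "\<bar>c k\<bar> \<le> 2 ^ n"
proof -
  define P where "P = lag_polynomial n c"
  have c0: "coeff P 0 = 1" by (simp add: P_def coeff_lag_polynomial)
  have "cmod (coeff P k) \<le> 2 ^ size (proots P)"
  proof (subst poly_eq_prod_mset_inverse_roots[OF c0], rule norm_coeff_prod_mset_inverse_roots_le)
    fix x assume "x \<in># proots P"
    hence "poly P x = 0" using c0 by (cases "P = 0") auto
    thus "1 \<le> cmod x" using assms(1) by (simp add: P_def poly_lag_polynomial)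
  qed
  also have "(2::real) ^ size (proots P) \<le> 2 ^ n"
    using size_proots_le[of P] degree_lag_polynomial[of n c]
    by (intro power_increasing) (auto simp: P_def)
  finally show ?thesis using assms by (simp add: P_def coeff_lag_polynomial)
qed

definition fps_of_real :: "real fps \<Rightarrow> complex fps" where
  "fps_of_real f = Abs_fps (\<lambda>n. of_real (f $ n))"

lemma fps_of_real_nth [simp]: "fps_of_real f $ n = of_real (f $ n)"
  by (simp add: fps_of_real_def)

lemma fps_of_real_mult: "fps_of_real (f * g) = fps_of_real f * fps_of_real g"
  by (rule fps_ext) (simp add: fps_mult_nth of_real_sum)

lemma fps_of_real_inverse:
  assumes "f $ 0 \<noteq> 0"
  shows "fps_of_real (inverse f) = inverse (fps_of_real f)"
proof -
  have "fps_of_real 1 = 1" by (rule fps_ext) simp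
  hence "fps_of_real f * fps_of_real (inverse f) = 1"
    using assms by (simp add: fps_of_real_mult[symmetric] inverse_mult_eq_1')
  thus ?thesis by (rule fps_inverse_unique[symmetric])
qed

lemma fps_of_poly_prod_mset:
  "fps_of_poly (\<Prod>x\<in>#Z. f x) = (\<Prod>x\<in>#Z. fps_of_poly (f x))"
  by (induction Z) (simp_all add: fps_of_poly_mult)

lemma inverse_one_plus_const_X:
  "inverse (1 + fps_const (a::complex) * fps_X) = Abs_fps (\<lambda>n. (-a) ^ n)"
proof (rule fps_inverse_unique, rule fps_ext)
  fix n
  have "(1 + fps_const a * fps_X) * Abs_fps (\<lambda>n. (-a) ^ n)
          = Abs_fps (\<lambda>n. (-a) ^ n) + fps_const a * (fps_X * Abs_fps (\<lambda>n. (-a) ^ n))"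
    by (simp add: algebra_simps)
  thus "((1 + fps_const a * fps_X) * Abs_fps (\<lambda>n. (-a) ^ n)) $ n = (1::complex fps) $ n"
    by (cases n) auto
qed

definition geometric_fps :: "real \<Rightarrow> real fps" where
  "geometric_fps \<rho> = Abs_fps (\<lambda>n. \<rho> ^ n)"

lemma geometric_fps_power_nth_nonneg: "0 \<le> \<rho> \<Longrightarrow> 0 \<le> (geometric_fps \<rho> ^ k) $ n"
  by (induction k arbitrary: n)
    (auto simp: fps_mult_nth geometric_fps_def intro!: sum_nonneg)

lemma geometric_fps_power_nth_mono:
  assumes "0 \<le> \<rho>" "k \<le> l"
  shows "(geometric_fps \<rho> ^ k) $ n \<le> (geometric_fps \<rho> ^ l) $ n"
proof -
  define F H where "F = geometric_fps \<rho> ^ k" and "H = geometric_fps \<rho> ^ (l - k)"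
  have "(geometric_fps \<rho> ^ j) $ 0 = 1" for j by (induction j) (simp_all add: geometric_fps_def)
  hence "H $ 0 = 1" by (simp add: H_def)
  hence "F $ n = F $ n * H $ (n - n)" by simp
  also have "\<dots> \<le> (\<Sum>i=0..n. F $ i * H $ (n - i))"
    using assms by (intro member_le_sum) (auto simp: F_def H_def geometric_fps_power_nth_nonneg)
  also have "\<dots> = (geometric_fps \<rho> ^ l) $ n"
  proof -
    have "geometric_fps \<rho> ^ l = F * H" using assms by (simp add: F_def H_def power_add[symmetric])
    thus ?thesis by (simp add: fps_mult_nth)
  qed
  finally show ?thesis by (simp add: F_def)
qed

lemma nonneg_summable_geometric_fps_power:
  assumes "0 \<le> \<rho>" "\<rho> < 1"
  shows "nonneg_summable (\<lambda>n. (geometric_fps \<rho> ^ k) $ n)"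
proof (induction k)
  case 0
  show ?case by (rule nonneg_summable_finite_support[of 0]) auto
next
  case (Suc k)
  have "nonneg_summable (\<lambda>n. \<rho> ^ n)"
    using assms by (auto simp: nonneg_summable_def intro: summable_geometric)
  from nonneg_summable_mult[OF this Suc] show ?case by (simp add: geometric_fps_def fps_nth_inverse)
qed

lemma norm_inverse_prod_mset_nth_le:
  assumes "\<And>x. x \<in># Z \<Longrightarrow> cmod (1/x) \<le> \<rho>"
  shows "cmod (inverse (\<Prod>x\<in>#Z. fps_of_poly [:1, - 1/x:]) $ n) \<le> (geometric_fps \<rho> ^ size Z) $ n"
  using assms
proof (induction Z arbitrary: n)
  case empty then show ?case by simp
next
  case (add x Z)
  have "inverse (fps_of_poly [:1, - 1/x:]) = Abs_fps (\<lambda>n. (1/x) ^ n)"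
    by (simp add: fps_of_poly_linear' inverse_one_plus_const_X)
  hence "inverse (\<Prod>y\<in>#add_mset x Z. fps_of_poly [:1, - 1/y:]) =
           Abs_fps (\<lambda>n. (1/x) ^ n) * inverse (\<Prod>y\<in>#Z. fps_of_poly [:1, - 1/y:])"
    by (simp only: prod_mset.add_mset image_mset_add_mset fps_inverse_mult)
  moreover have "cmod (Abs_fps (\<lambda>n. (1/x) ^ n) $ k) \<le> \<rho> ^ k" for k
    using add.prems[of x] by (simp add: norm_power power_mono)
  ultimately have "cmod (inverse (\<Prod>y\<in>#add_mset x Z. fps_of_poly [:1, - 1/y:]) $ n)
                     \<le> (Abs_fps (\<lambda>n. \<rho> ^ n) * Abs_fps (\<lambda>n. (geometric_fps \<rho> ^ size Z) $ n)) $ n"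
    using add by (simp only:) (rule fps_mult_nth_norm_le, auto)
  thus ?case by (simp add: geometric_fps_def fps_nth_inverse)
qed

text \<open>Splitting \<open>1 - \<Sum> c\<^sub>j z\<^sup>j\<close> into linear factors \<open>1 - z/x\<close> over its roots, each
  inverse factor is a geometric series of ratio \<open>1/|x| \<le> 1/R\<close>.\<close>
lemma inverse_lag_fps_nth_bound:
  fixes c :: "nat \<Rightarrow> real"
  assumes "\<And>z. lag_poly n c z = 0 \<Longrightarrow> cmod z \<ge> R" "R > 0"
  shows "\<bar>inverse (Abs_fps (\<lambda>j. if j = 0 then 1 else if j \<le> n then - c j else 0)) $ k\<bar>
           \<le> (geometric_fps (1/R) ^ n) $ k"
proof -
  define P where "P = lag_polynomial n c"
  define B where "B = Abs_fps (\<lambda>j. if j = 0 then 1 else if j \<le> n then - c j else 0)"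
  have c0: "coeff P 0 = 1" by (simp add: P_def coeff_lag_polynomial)
  have "fps_of_real (inverse B) = inverse (fps_of_real B)"
    by (rule fps_of_real_inverse) (simp add: B_def)
  also have "fps_of_real B = fps_of_poly P"
    by (rule fps_ext) (simp add: B_def P_def coeff_lag_polynomial)
  also have "\<dots> = (\<Prod>x\<in>#proots P. fps_of_poly [:1, - 1/x:])"
    by (subst poly_eq_prod_mset_inverse_roots[OF c0]) (simp add: fps_of_poly_prod_mset)
  finally have B_eq: "fps_of_real (inverse B) = inverse (\<Prod>x\<in>#proots P. fps_of_poly [:1, - 1/x:])" .
  have "cmod (inverse (\<Prod>x\<in>#proots P. fps_of_poly [:1, - 1/x:]) $ k)
          \<le> (geometric_fps (1/R) ^ size (proots P)) $ k"
  proof (rule norm_inverse_prod_mset_nth_le)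
    fix x assume "x \<in># proots P"
    hence "poly P x = 0" using c0 by (cases "P = 0") auto
    hence "cmod x \<ge> R" using assms(1) by (simp add: P_def poly_lag_polynomial)
    thus "cmod (1/x) \<le> 1/R" using assms(2) by (simp add: norm_divide divide_le_eq field_simps)
  qed
  also have "\<dots> \<le> (geometric_fps (1/R) ^ n) $ k"
    using size_proots_le[of P] degree_lag_polynomial[of n c] assms(2)
    by (intro geometric_fps_power_nth_mono) (auto simp: P_def)
  finally have "cmod (fps_of_real (inverse B) $ k) \<le> (geometric_fps (1/R) ^ n) $ k"
    by (simp only: B_eq)
  thus ?thesis by (simp add: B_def)
qed

section \<open>Coefficientwise partial derivatives of parametrised power series\<close>

definition has_coeff_partial ::
    "nat \<Rightarrow> ((nat \<Rightarrow> real) \<Rightarrow> real fps) \<Rightarrow> ((nat \<Rightarrow> real) \<Rightarrow> real fps) \<Rightarrow> bool" where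
  "has_coeff_partial i f f' \<longleftrightarrow>
     (\<forall>\<theta> n. ((\<lambda>h. f (\<theta>(i := h)) $ n) has_real_derivative f' \<theta> $ n) (at (\<theta> i)))"

lemma has_coeff_partial_cong:
  "has_coeff_partial i f f' \<Longrightarrow> (\<And>\<theta>. f' \<theta> = f'' \<theta>) \<Longrightarrow> has_coeff_partial i f f''"
  unfolding has_coeff_partial_def by simp

lemma has_coeff_partial_const: "has_coeff_partial i (\<lambda>_. F) (\<lambda>_. 0)"
  unfolding has_coeff_partial_def by simp

lemma has_coeff_partial_add:
  assumes "has_coeff_partial i f f'" "has_coeff_partial i g g'"
  shows "has_coeff_partial i (\<lambda>\<theta>. f \<theta> + g \<theta>) (\<lambda>\<theta>. f' \<theta> + g' \<theta>)"
  using assms unfolding has_coeff_partial_def by (auto intro!: DERIV_add)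

lemma has_coeff_partial_mult:
  assumes "has_coeff_partial i f f'" "has_coeff_partial i g g'"
  shows "has_coeff_partial i (\<lambda>\<theta>. f \<theta> * g \<theta>) (\<lambda>\<theta>. f' \<theta> * g \<theta> + f \<theta> * g' \<theta>)"
  unfolding has_coeff_partial_def
proof (intro allI)
  fix \<theta> n
  have "((\<lambda>h. \<Sum>k=0..n. f (\<theta>(i:=h)) $ k * g (\<theta>(i:=h)) $ (n - k)) has_real_derivative
          (\<Sum>k=0..n. f (\<theta>(i:=\<theta> i)) $ k * g' \<theta> $ (n - k) + f' \<theta> $ k * g (\<theta>(i:=\<theta> i)) $ (n - k)))
          (at (\<theta> i))"
    using assms unfolding has_coeff_partial_def by (intro DERIV_sum DERIV_mult') auto
  thus "((\<lambda>h. (f (\<theta>(i:=h)) * g (\<theta>(i:=h))) $ n) has_real_derivative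
          (f' \<theta> * g \<theta> + f \<theta> * g' \<theta>) $ n) (at (\<theta> i))"
    by (simp add: fps_mult_nth sum.distrib algebra_simps)
qed

lemma has_coeff_partial_affine:
  assumes "\<And>\<theta> h. f (\<theta>(i := h)) = f \<theta> + fps_const (h - \<theta> i) * E"
  shows "has_coeff_partial i f (\<lambda>_. E)"
  unfolding has_coeff_partial_def
proof (intro allI)
  fix \<theta> n
  have "((\<lambda>h. f \<theta> $ n + (h - \<theta> i) * E $ n) has_real_derivative E $ n) (at (\<theta> i))"
    by (auto intro!: derivative_eq_intros)
  thus "((\<lambda>h. f (\<theta>(i := h)) $ n) has_real_derivative (\<lambda>_. E) \<theta> $ n) (at (\<theta> i))"
    by (simp add: assms)
qed

lemma fps_inverse_nth_recursion:
  fixes f :: "real fps"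
  assumes "f $ 0 = 1" "n > 0"
  shows "inverse f $ n = - (\<Sum>i=1..n. f $ i * inverse f $ (n - i))"
proof -
  have "(\<Sum>i=0..n. f $ i * inverse f $ (n - i)) = 0"
    using assms arg_cong[OF inverse_mult_eq_1'[of f], of "\<lambda>g. g $ n"] by (simp add: fps_mult_nth)
  moreover have "(\<Sum>i=0..n. f $ i * inverse f $ (n - i))
                   = f $ 0 * inverse f $ n + (\<Sum>i=1..n. f $ i * inverse f $ (n - i))"
    using assms(2) by (simp add: sum.atLeast_Suc_atMost)
  ultimately show ?thesis using assms(1) by simp
qed

lemma continuous_fps_inverse_nth:
  fixes B :: "real \<Rightarrow> real fps"
  assumes "\<And>k. continuous (at h0) (\<lambda>h. B h $ k)" "\<And>h. B h $ 0 = 1"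
  shows "continuous (at h0) (\<lambda>h. inverse (B h) $ n)"
proof (induction n rule: less_induct)
  case (less n)
  show ?case
  proof (cases "n = 0")
    case True then show ?thesis using assms(2) by simp
  next
    case False
    have "(\<lambda>h. inverse (B h) $ n) = (\<lambda>h. - (\<Sum>i=1..n. B h $ i * inverse (B h) $ (n - i)))"
      using False assms(2) by (intro ext fps_inverse_nth_recursion) auto
    thus ?thesis using less assms(1) False by (auto intro!: continuous_intros)
  qed
qed

lemma fps_inverse_diff:
  fixes f g :: "'a::field fps"
  assumes "f $ 0 \<noteq> 0" "g $ 0 \<noteq> 0"
  shows "inverse f - inverse g = inverse f * (g - f) * inverse g"
  using assms by (simp add: algebra_simps inverse_mult_eq_1 inverse_mult_eq_1')

lemma has_real_derivative_fps_inverse_nth: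
  fixes B :: "real \<Rightarrow> real fps"
  assumes "\<And>h. B h $ 0 = 1" "\<And>h. B h = B h0 - fps_const (h - h0) * E"
  shows "((\<lambda>h. inverse (B h) $ n) has_real_derivative (E * inverse (B h0) * inverse (B h0)) $ n)
           (at h0)"
proof -
  have "continuous (at h0) (\<lambda>h. B h $ k)" for k
  proof -
    have "(\<lambda>h. B h $ k) = (\<lambda>h. B h0 $ k - (h - h0) * E $ k)" by (subst assms(2)) simp
    thus ?thesis by (simp add: continuous_intros)
  qed
  hence "continuous (at h0) (\<lambda>h. inverse (B h) $ k)" for k
    using assms(1) by (rule continuous_fps_inverse_nth)
  hence "continuous (at h0) (\<lambda>h. (E * inverse (B h) * inverse (B h0)) $ n)"
    unfolding fps_mult_nth by (intro continuous_intros)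
  hence lim: "((\<lambda>h. (E * inverse (B h) * inverse (B h0)) $ n)
           \<longlongrightarrow> (E * inverse (B h0) * inverse (B h0)) $ n) (at h0)"
    by (simp add: continuous_at)
  have quotient: "(inverse (B h) $ n - inverse (B h0) $ n) / (h - h0)
                   = (E * inverse (B h) * inverse (B h0)) $ n" if "h \<noteq> h0" for h
  proof -
    have "B h0 - B h = fps_const (h - h0) * E" by (subst assms(2)[of h]) simp
    hence "inverse (B h) - inverse (B h0)
             = fps_const (h - h0) * (E * inverse (B h) * inverse (B h0))"
      using assms(1) fps_inverse_diff[of "B h" "B h0"] by (simp add: mult_ac)
    from arg_cong[OF this, of "\<lambda>f. f $ n"] show ?thesis using that by simp
  qed
  have "((\<lambda>h. (inverse (B h) $ n - inverse (B h0) $ n) / (h - h0))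
           \<longlongrightarrow> (E * inverse (B h0) * inverse (B h0)) $ n) (at h0)"
    using lim by (rule Lim_transform_eventually) (auto simp: eventually_at_filter quotient)
  thus ?thesis by (simp add: has_field_derivative_iff)
qed

section \<open>Summable majorants with Lipschitz bounds\<close>

definition coeffs_majorized ::
    "'p set \<Rightarrow> ('p \<Rightarrow> 'p \<Rightarrow> real) \<Rightarrow> ('p \<Rightarrow> real fps) \<Rightarrow> (nat \<Rightarrow> real) \<Rightarrow> bool" where
  "coeffs_majorized T N f U \<longleftrightarrow>
     (\<forall>\<theta>\<in>T. \<forall>n. \<bar>f \<theta> $ n\<bar> \<le> U n) \<and>
     (\<forall>\<theta>1\<in>T. \<forall>\<theta>2\<in>T. \<forall>n. \<bar>f \<theta>1 $ n - f \<theta>2 $ n\<bar> \<le> U n * N \<theta>1 \<theta>2)"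

definition lipschitz_summable :: "'p set \<Rightarrow> ('p \<Rightarrow> 'p \<Rightarrow> real) \<Rightarrow> ('p \<Rightarrow> real fps) \<Rightarrow> bool" where
  "lipschitz_summable T N f \<longleftrightarrow> (\<exists>U. nonneg_summable U \<and> coeffs_majorized T N f U)"

lemma coeffs_majorized_mono:
  assumes "coeffs_majorized T N f U" "\<And>n. U n \<le> V n" "\<And>\<theta>1 \<theta>2. \<theta>1 \<in> T \<Longrightarrow> \<theta>2 \<in> T \<Longrightarrow> N \<theta>1 \<theta>2 \<ge> 0"
  shows "coeffs_majorized T N f V"
  using assms unfolding coeffs_majorized_def
  by (smt (verit) mult_right_mono)

lemma lipschitz_summable_common_majorant:
  assumes "finite I" "\<And>i. i \<in> I \<Longrightarrow> lipschitz_summable T N (F i)"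
    and "\<And>\<theta>1 \<theta>2. \<theta>1 \<in> T \<Longrightarrow> \<theta>2 \<in> T \<Longrightarrow> N \<theta>1 \<theta>2 \<ge> 0"
  obtains U where "nonneg_summable U" "\<And>i. i \<in> I \<Longrightarrow> coeffs_majorized T N (F i) U"
proof -
  have "\<forall>i\<in>I. \<exists>U. nonneg_summable U \<and> coeffs_majorized T N (F i) U"
    using assms(2) unfolding lipschitz_summable_def by blast
  then obtain Uf where Uf: "\<forall>i\<in>I. nonneg_summable (Uf i) \<and> coeffs_majorized T N (F i) (Uf i)"
    using bchoice by metis
  show ?thesis
  proof
    show "nonneg_summable (\<lambda>n. \<Sum>i\<in>I. Uf i n)" using Uf assms(1) by (intro nonneg_summable_sum) auto
  next
    fix i assume "i \<in> I"
    have le: "Uf i n \<le> (\<Sum>i\<in>I. Uf i n)" for n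
      using Uf assms(1) \<open>i \<in> I\<close> by (intro member_le_sum) (auto simp: nonneg_summable_def)
    show "coeffs_majorized T N (F i) (\<lambda>n. \<Sum>i\<in>I. Uf i n)"
    proof (rule coeffs_majorized_mono[OF _ le assms(3)])
      show "coeffs_majorized T N (F i) (Uf i)" using Uf \<open>i \<in> I\<close> by blast
    qed
  qed
qed

lemma lipschitz_summable_finite_support:
  assumes "\<And>\<theta>1 \<theta>2. \<theta>1 \<in> T \<Longrightarrow> \<theta>2 \<in> T \<Longrightarrow> N \<theta>1 \<theta>2 \<ge> 0" "\<And>n. n > K \<Longrightarrow> F $ n = 0"
  shows "lipschitz_summable T N (\<lambda>_. F)"
  unfolding lipschitz_summable_def coeffs_majorized_def
  using assms by (intro exI[of _ "\<lambda>n. \<bar>F $ n\<bar>"]) (auto intro!: nonneg_summable_finite_support[of K])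

lemma lipschitz_summable_add:
  assumes "lipschitz_summable T N f" "lipschitz_summable T N g"
  shows "lipschitz_summable T N (\<lambda>\<theta>. f \<theta> + g \<theta>)"
proof -
  obtain U V where U: "nonneg_summable U" "coeffs_majorized T N f U"
    and V: "nonneg_summable V" "coeffs_majorized T N g V"
    using assms unfolding lipschitz_summable_def by blast
  have "coeffs_majorized T N (\<lambda>\<theta>. f \<theta> + g \<theta>) (\<lambda>n. U n + V n)"
    unfolding coeffs_majorized_def
  proof (intro conjI ballI allI)
    fix \<theta> n assume "\<theta> \<in> T"
    thus "\<bar>(f \<theta> + g \<theta>) $ n\<bar> \<le> U n + V n"
      using U(2) V(2) unfolding coeffs_majorized_def
      by (simp add: order_trans[OF abs_triangle_ineq add_mono])
  next
    fix \<theta>1 \<theta>2 n assume "\<theta>1 \<in> T" "\<theta>2 \<in> T"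
    hence "\<bar>f \<theta>1 $ n - f \<theta>2 $ n\<bar> + \<bar>g \<theta>1 $ n - g \<theta>2 $ n\<bar> \<le> U n * N \<theta>1 \<theta>2 + V n * N \<theta>1 \<theta>2"
      using U(2) V(2) unfolding coeffs_majorized_def by (intro add_mono) auto
    thus "\<bar>(f \<theta>1 + g \<theta>1) $ n - (f \<theta>2 + g \<theta>2) $ n\<bar> \<le> (U n + V n) * N \<theta>1 \<theta>2"
      by (simp add: algebra_simps)
  qed
  thus ?thesis using nonneg_summable_add[OF U(1) V(1)] unfolding lipschitz_summable_def by blast
qed

text \<open>The increment of a product is split as \<open>(f\<^sub>1 - f\<^sub>2) g\<^sub>1 + f\<^sub>2 (g\<^sub>1 - g\<^sub>2)\<close>, each
  term dominated by the Cauchy product of the majorants.\<close>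
lemma lipschitz_summable_mult:
  assumes N: "\<And>\<theta>1 \<theta>2. \<theta>1 \<in> T \<Longrightarrow> \<theta>2 \<in> T \<Longrightarrow> N \<theta>1 \<theta>2 \<ge> 0"
    and "lipschitz_summable T N f" "lipschitz_summable T N g"
  shows "lipschitz_summable T N (\<lambda>\<theta>. f \<theta> * g \<theta>)"
proof -
  obtain U V where U: "nonneg_summable U" "coeffs_majorized T N f U"
    and V: "nonneg_summable V" "coeffs_majorized T N g V"
    using assms(2,3) unfolding lipschitz_summable_def by blast
  define W where "W = (\<lambda>n. (Abs_fps U * Abs_fps V) $ n)"
  have W: "nonneg_summable W" unfolding W_def by (rule nonneg_summable_mult[OF U(1) V(1)])
  have scaled: "(Abs_fps (\<lambda>k. c * U k) * Abs_fps V) $ n = c * W n"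
    "(Abs_fps U * Abs_fps (\<lambda>k. c * V k)) $ n = c * W n" for c n
    unfolding W_def fps_mult_nth by (simp_all add: sum_distrib_left mult_ac)
  have "coeffs_majorized T N (\<lambda>\<theta>. f \<theta> * g \<theta>) (\<lambda>n. 2 * W n)"
    unfolding coeffs_majorized_def
  proof (intro conjI ballI allI)
    fix \<theta> n assume "\<theta> \<in> T"
    hence "\<bar>(f \<theta> * g \<theta>) $ n\<bar> \<le> W n"
      using U(2) V(2) fps_mult_nth_norm_le[of "f \<theta>" U "g \<theta>" V n]
      unfolding coeffs_majorized_def W_def by auto
    thus "\<bar>(f \<theta> * g \<theta>) $ n\<bar> \<le> 2 * W n" using W by (auto simp: nonneg_summable_def)
  next
    fix \<theta>1 \<theta>2 n assume t: "\<theta>1 \<in> T" "\<theta>2 \<in> T"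
    define c where "c = N \<theta>1 \<theta>2"
    have "\<bar>((f \<theta>1 - f \<theta>2) * g \<theta>1) $ n\<bar> \<le> (Abs_fps (\<lambda>k. c * U k) * Abs_fps V) $ n"
      using U(2) V(2) t fps_mult_nth_norm_le[of "f \<theta>1 - f \<theta>2" "\<lambda>k. c * U k" "g \<theta>1" V n]
      unfolding coeffs_majorized_def c_def by (auto simp: mult.commute)
    moreover have "\<bar>(f \<theta>2 * (g \<theta>1 - g \<theta>2)) $ n\<bar> \<le> (Abs_fps U * Abs_fps (\<lambda>k. c * V k)) $ n"
      using U(2) V(2) t fps_mult_nth_norm_le[of "f \<theta>2" U "g \<theta>1 - g \<theta>2" "\<lambda>k. c * V k" n]
      unfolding coeffs_majorized_def c_def by (auto simp: mult.commute)
    moreover have "(f \<theta>1 * g \<theta>1) $ n - (f \<theta>2 * g \<theta>2) $ n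
                     = ((f \<theta>1 - f \<theta>2) * g \<theta>1) $ n + (f \<theta>2 * (g \<theta>1 - g \<theta>2)) $ n"
      by (simp add: algebra_simps)
    ultimately show "\<bar>(f \<theta>1 * g \<theta>1) $ n - (f \<theta>2 * g \<theta>2) $ n\<bar> \<le> 2 * W n * N \<theta>1 \<theta>2"
      unfolding scaled c_def by (simp add: algebra_simps)
  qed
  moreover have "nonneg_summable (\<lambda>n. 2 * W n)" by (rule nonneg_summable_cmult[OF W]) simp
  ultimately show ?thesis unfolding lipschitz_summable_def by blast
qed

definition twice_lipschitz_summable ::
    "(nat \<Rightarrow> real) set \<Rightarrow> ((nat \<Rightarrow> real) \<Rightarrow> (nat \<Rightarrow> real) \<Rightarrow> real)
       \<Rightarrow> ((nat \<Rightarrow> real) \<Rightarrow> real fps) \<Rightarrow> bool" where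
  "twice_lipschitz_summable T N f \<longleftrightarrow>
     (\<exists>f1 f2. (\<forall>i. has_coeff_partial i f (f1 i)) \<and> (\<forall>i j. has_coeff_partial i (f1 j) (f2 i j)) \<and>
        lipschitz_summable T N f \<and> (\<forall>i. lipschitz_summable T N (f1 i)) \<and>
        (\<forall>i j. lipschitz_summable T N (f2 i j)))"

lemma twice_lipschitz_summableI:
  assumes "\<And>i. has_coeff_partial i f (f' i)" "\<And>i j. has_coeff_partial i (f' j) (f'' i j)"
    and "lipschitz_summable T N f" "\<And>i. lipschitz_summable T N (f' i)"
    and "\<And>i j. lipschitz_summable T N (f'' i j)"
  shows "twice_lipschitz_summable T N f"
  using assms unfolding twice_lipschitz_summable_def by blast

lemma twice_lipschitz_summable_mult:
  assumes N: "\<And>\<theta>1 \<theta>2. \<theta>1 \<in> T \<Longrightarrow> \<theta>2 \<in> T \<Longrightarrow> N \<theta>1 \<theta>2 \<ge> 0"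
    and "twice_lipschitz_summable T N f" "twice_lipschitz_summable T N g"
  shows "twice_lipschitz_summable T N (\<lambda>\<theta>. f \<theta> * g \<theta>)"
proof -
  obtain f1 f2 where f: "\<And>i. has_coeff_partial i f (f1 i)"
    "\<And>i j. has_coeff_partial i (f1 j) (f2 i j)" "lipschitz_summable T N f"
    "\<And>i. lipschitz_summable T N (f1 i)" "\<And>i j. lipschitz_summable T N (f2 i j)"
    using assms(2) unfolding twice_lipschitz_summable_def by blast
  obtain g1 g2 where g: "\<And>i. has_coeff_partial i g (g1 i)"
    "\<And>i j. has_coeff_partial i (g1 j) (g2 i j)" "lipschitz_summable T N g"
    "\<And>i. lipschitz_summable T N (g1 i)" "\<And>i j. lipschitz_summable T N (g2 i j)"
    using assms(3) unfolding twice_lipschitz_summable_def by blast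
  note mult = lipschitz_summable_mult[OF N]
  show ?thesis
  proof (rule twice_lipschitz_summableI[where f' = "\<lambda>i \<theta>. f1 i \<theta> * g \<theta> + f \<theta> * g1 i \<theta>"
        and f'' = "\<lambda>i j \<theta>. (f2 i j \<theta> * g \<theta> + f1 j \<theta> * g1 i \<theta>) + (f1 i \<theta> * g1 j \<theta> + f \<theta> * g2 i j \<theta>)"])
    show "has_coeff_partial i (\<lambda>\<theta>. f \<theta> * g \<theta>) (\<lambda>\<theta>. f1 i \<theta> * g \<theta> + f \<theta> * g1 i \<theta>)" for i
      by (rule has_coeff_partial_mult[OF f(1) g(1)])
    show "has_coeff_partial i (\<lambda>\<theta>. f1 j \<theta> * g \<theta> + f \<theta> * g1 j \<theta>)
            (\<lambda>\<theta>. (f2 i j \<theta> * g \<theta> + f1 j \<theta> * g1 i \<theta>) + (f1 i \<theta> * g1 j \<theta> + f \<theta> * g2 i j \<theta>))" for i j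
      by (intro has_coeff_partial_add has_coeff_partial_mult f g)
  qed (auto intro!: lipschitz_summable_add mult f g)
qed

lemma twice_lipschitz_summable_common_majorant:
  assumes "twice_lipschitz_summable T N f" "finite R"
    and N: "\<And>\<theta>1 \<theta>2. \<theta>1 \<in> T \<Longrightarrow> \<theta>2 \<in> T \<Longrightarrow> N \<theta>1 \<theta>2 \<ge> 0"
  obtains f' f'' W where "\<And>i. has_coeff_partial i f (f' i)"
    "\<And>i j. has_coeff_partial i (f' j) (f'' i j)" "nonneg_summable W" "coeffs_majorized T N f W"
    "\<And>i. i \<in> R \<Longrightarrow> coeffs_majorized T N (f' i) W"
    "\<And>i j. i \<in> R \<Longrightarrow> j \<in> R \<Longrightarrow> coeffs_majorized T N (f'' i j) W"
proof -
  obtain f' f'' where f': "\<And>i. has_coeff_partial i f (f' i)"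
    and f'': "\<And>i j. has_coeff_partial i (f' j) (f'' i j)"
    and lip: "lipschitz_summable T N f" "\<And>i. lipschitz_summable T N (f' i)"
      "\<And>i j. lipschitz_summable T N (f'' i j)"
    using assms(1) unfolding twice_lipschitz_summable_def by blast
  define I where "I = insert f (f' ` R \<union> case_prod f'' ` (R \<times> R))"
  have I: "finite I" "\<And>g. g \<in> I \<Longrightarrow> lipschitz_summable T N g"
    using lip assms(2) by (auto simp: I_def)
  obtain W where "nonneg_summable W" "\<And>g. g \<in> I \<Longrightarrow> coeffs_majorized T N g W"
    using lipschitz_summable_common_majorant[where F = "\<lambda>g. g", OF I N] by blast
  moreover have "f \<in> I" "\<And>i. i \<in> R \<Longrightarrow> f' i \<in> I" "\<And>i j. i \<in> R \<Longrightarrow> j \<in> R \<Longrightarrow> f'' i j \<in> I"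
    unfolding I_def by (auto intro: rev_image_eqI)
  ultimately show ?thesis using that f' f'' by blast
qed

section \<open>The residual power series on \<open>\<Theta>\<^sub>\<kappa>\<close>\<close>

abbreviation param_dist :: "nat \<Rightarrow> (nat \<Rightarrow> real) \<Rightarrow> (nat \<Rightarrow> real) \<Rightarrow> real" where
  "param_dist m \<theta>1 \<theta>2 \<equiv> param_norm m (\<lambda>k. \<theta>1 k - \<theta>2 k)"

lemma param_norm_nonneg: "param_norm m f \<ge> 0"
  by (simp add: param_norm_def sum_nonneg)

lemma abs_le_param_norm: "k \<in> {1..m} \<Longrightarrow> \<bar>f k\<bar> \<le> param_norm m f"
  unfolding param_norm_def
  by (metis real_sqrt_abs real_sqrt_le_mono finite_atLeastAtMost member_le_sum zero_le_power2)

definition ma_direction :: "nat \<Rightarrow> nat \<Rightarrow> nat \<Rightarrow> real fps" where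
  "ma_direction p q i = (if p < i \<and> i \<le> p + q then fps_X ^ (i - p) else 0)"

definition ar_direction :: "nat \<Rightarrow> nat \<Rightarrow> real fps" where
  "ar_direction p i = (if 1 \<le> i \<and> i \<le> p then fps_X ^ i else 0)"

lemma b_theta_fps_upd:
  "b_theta_fps p q (\<theta>(i := h)) = b_theta_fps p q \<theta> - fps_const (h - \<theta> i) * ma_direction p q i"
  by (rule fps_ext) (auto simp: b_theta_fps_def ma_direction_def)

lemma a_theta_fps_upd:
  "a_theta_fps p (\<theta>(i := h)) = a_theta_fps p \<theta> + fps_const (h - \<theta> i) * (- ar_direction p i)"
  by (rule fps_ext) (auto simp: a_theta_fps_def ar_direction_def)

text \<open>The \<open>k\<close>-th derivative of \<open>(1-z)\<^sup>d\<close> with respect to \<open>d\<close>, at \<open>d = \<theta>\<^sub>e\<close>.\<close>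
definition frac_deriv_fps :: "nat \<Rightarrow> nat \<Rightarrow> (nat \<Rightarrow> real) \<Rightarrow> real fps" where
  "frac_deriv_fps e k \<theta> = Abs_fps (\<lambda>m. poly ((pderiv ^^ k) (frac_coeff_poly m)) (\<theta> e))"

definition residual_fps :: "nat \<Rightarrow> nat \<Rightarrow> (nat \<Rightarrow> real) \<Rightarrow> real fps" where
  "residual_fps p q \<theta> =
     inverse (b_theta_fps p q \<theta>) * a_theta_fps p \<theta> * frac_deriv_fps (p + q + 1) 0 \<theta>"

lemma gamma_coef_eq_residual_fps:
  assumes "\<theta> (p + q + 1) \<in> {0<..<1}"
  shows "gamma_coef p q \<theta> s = residual_fps p q \<theta> $ s"
proof -
  have "frac_fps (\<theta> (p + q + 1)) = frac_deriv_fps (p + q + 1) 0 \<theta>"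
    using assms by (intro fps_ext) (simp add: frac_fps_def frac_deriv_fps_def frac_alpha_eq_poly)
  thus ?thesis by (simp add: gamma_coef_def residual_fps_def)
qed

lemma has_coeff_partial_inverse_b_theta_fps:
  "has_coeff_partial i (\<lambda>\<theta>. inverse (b_theta_fps p q \<theta>))
     (\<lambda>\<theta>. ma_direction p q i * inverse (b_theta_fps p q \<theta>) * inverse (b_theta_fps p q \<theta>))"
  unfolding has_coeff_partial_def
proof (intro allI)
  fix \<theta> n
  have "((\<lambda>h. inverse (b_theta_fps p q (\<theta>(i := h))) $ n) has_real_derivative
          (ma_direction p q i * inverse (b_theta_fps p q (\<theta>(i := \<theta> i)))
             * inverse (b_theta_fps p q (\<theta>(i := \<theta> i)))) $ n) (at (\<theta> i))"
    by (rule has_real_derivative_fps_inverse_nth) (simp add: b_theta_fps_def, simp add: b_theta_fps_upd)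
  thus "((\<lambda>h. inverse (b_theta_fps p q (\<theta>(i := h))) $ n) has_real_derivative
          (ma_direction p q i * inverse (b_theta_fps p q \<theta>) * inverse (b_theta_fps p q \<theta>)) $ n) (at (\<theta> i))"
    by simp
qed

lemma has_coeff_partial_frac_deriv_fps:
  "has_coeff_partial i (frac_deriv_fps e k) (\<lambda>\<theta>. if i = e then frac_deriv_fps e (Suc k) \<theta> else 0)"
  unfolding has_coeff_partial_def
proof (intro allI)
  fix \<theta> n
  show "((\<lambda>h. frac_deriv_fps e k (\<theta>(i := h)) $ n) has_real_derivative
          (if i = e then frac_deriv_fps e (Suc k) \<theta> else 0) $ n) (at (\<theta> i))"
    using poly_DERIV[of "(pderiv ^^ k) (frac_coeff_poly n)" "\<theta> i"]
    by (cases "i = e") (simp_all add: frac_deriv_fps_def)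
qed

context
  fixes p q :: nat and \<kappa> d1 d2 :: real
begin

abbreviation "\<Theta> \<equiv> Theta_kappa p q \<kappa> d1 d2"
abbreviation "dist\<Theta> \<equiv> param_dist (p + q + 1)"

lemma lipschitz_summable_finite_support_param:
  "(\<And>n. n > K \<Longrightarrow> F $ n = 0) \<Longrightarrow> lipschitz_summable \<Theta> dist\<Theta> (\<lambda>_. F)"
  by (rule lipschitz_summable_finite_support[OF param_norm_nonneg])

lemma lipschitz_summable_a_theta_fps:
  assumes "\<kappa> > 0"
  shows "lipschitz_summable \<Theta> dist\<Theta> (a_theta_fps p)"
proof -
  define U where "U = (\<lambda>n::nat. if n \<le> p then 2 ^ p + 1 else (0::real))"
  have coeff_bound: "\<bar>\<theta> k\<bar> \<le> 2 ^ p" if "\<theta> \<in> \<Theta>" "1 \<le> k" "k \<le> p" for \<theta> k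
    using that assms by (intro lag_poly_coeff_bound[of p \<theta>]) (auto simp: Theta_kappa_def)
  have "coeffs_majorized \<Theta> dist\<Theta> (a_theta_fps p) U"
    unfolding coeffs_majorized_def
  proof (intro conjI ballI allI)
    fix \<theta> n assume "\<theta> \<in> \<Theta>"
    thus "\<bar>a_theta_fps p \<theta> $ n\<bar> \<le> U n"
      using coeff_bound[of \<theta> n] by (auto simp: a_theta_fps_def U_def)
  next
    fix \<theta>1 \<theta>2 n assume "\<theta>1 \<in> \<Theta>" "\<theta>2 \<in> \<Theta>"
    show "\<bar>a_theta_fps p \<theta>1 $ n - a_theta_fps p \<theta>2 $ n\<bar> \<le> U n * dist\<Theta> \<theta>1 \<theta>2"
    proof (cases "1 \<le> n \<and> n \<le> p")
      case True
      have "\<bar>\<theta>1 n - \<theta>2 n\<bar> \<le> dist\<Theta> \<theta>1 \<theta>2"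
        using True by (intro abs_le_param_norm[where f = "\<lambda>k. \<theta>1 k - \<theta>2 k"]) auto
      also have "\<dots> \<le> (2 ^ p + 1) * dist\<Theta> \<theta>1 \<theta>2"
        using param_norm_nonneg[of "p + q + 1" "\<lambda>k. \<theta>1 k - \<theta>2 k"] by (simp add: distrib_right)
      finally show ?thesis using True by (simp add: a_theta_fps_def U_def abs_minus_commute)
    qed (auto simp: a_theta_fps_def U_def param_norm_nonneg)
  qed
  moreover have "nonneg_summable U"
    by (rule nonneg_summable_finite_support[of p]) (auto simp: U_def)
  ultimately show ?thesis unfolding lipschitz_summable_def by blast
qed

lemma lipschitz_summable_frac_deriv_fps:
  assumes "0 < d1" "d2 \<le> 1/2" "k \<le> 2"
  shows "lipschitz_summable \<Theta> dist\<Theta> (frac_deriv_fps (p + q + 1) k)"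
proof -
  have d: "\<theta> (p + q + 1) \<in> {d1..d2}" if "\<theta> \<in> \<Theta>" for \<theta>
    using that by (auto simp: Theta_kappa_def)
  have bound: "\<bar>poly ((pderiv ^^ j) (frac_coeff_poly m)) x\<bar> \<le> frac_majorant d1 m"
    if "x \<in> {d1..d2}" "j \<le> 3" for x j m
    using that assms by (intro higher_pderiv_frac_coeff_poly_le_majorant) auto
  have "coeffs_majorized \<Theta> dist\<Theta> (frac_deriv_fps (p + q + 1) k) (frac_majorant d1)"
    unfolding coeffs_majorized_def
  proof (intro conjI ballI allI)
    fix \<theta> n assume "\<theta> \<in> \<Theta>"
    thus "\<bar>frac_deriv_fps (p + q + 1) k \<theta> $ n\<bar> \<le> frac_majorant d1 n"
      using bound d assms by (simp add: frac_deriv_fps_def)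
  next
    fix \<theta>1 \<theta>2 n assume "\<theta>1 \<in> \<Theta>" "\<theta>2 \<in> \<Theta>"
    let ?P = "(pderiv ^^ k) (frac_coeff_poly n)"
    have "\<bar>poly ?P (\<theta>1 (p + q + 1)) - poly ?P (\<theta>2 (p + q + 1))\<bar>
            \<le> frac_majorant d1 n * \<bar>\<theta>1 (p + q + 1) - \<theta>2 (p + q + 1)\<bar>"
      using bound[of _ "Suc k" n] assms d \<open>\<theta>1 \<in> \<Theta>\<close> \<open>\<theta>2 \<in> \<Theta>\<close>
      by (intro poly_lipschitz_on_interval[where a = d1 and b = d2]) auto
    also have "\<dots> \<le> frac_majorant d1 n * dist\<Theta> \<theta>1 \<theta>2"
      using nonneg_summable_frac_majorant[OF assms(1)]
      by (intro mult_left_mono abs_le_param_norm[where f = "\<lambda>k. \<theta>1 k - \<theta>2 k"])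
        (auto simp: nonneg_summable_def)
    finally show "\<bar>frac_deriv_fps (p + q + 1) k \<theta>1 $ n - frac_deriv_fps (p + q + 1) k \<theta>2 $ n\<bar>
                    \<le> frac_majorant d1 n * dist\<Theta> \<theta>1 \<theta>2"
      by (simp add: frac_deriv_fps_def)
  qed
  with nonneg_summable_frac_majorant[OF assms(1)] show ?thesis
    unfolding lipschitz_summable_def by blast
qed

text \<open>\<open>b\<^sub>1\<^sup>-\<^sup>1 - b\<^sub>2\<^sup>-\<^sup>1 = b\<^sub>1\<^sup>-\<^sup>1 (b\<^sub>2 - b\<^sub>1) b\<^sub>2\<^sup>-\<^sup>1\<close>, where \<open>b\<^sub>2 - b\<^sub>1\<close> is a polynomial of degree \<open>q\<close>
  with coefficients bounded by \<open>\<parallel>\<theta>\<^sub>1 - \<theta>\<^sub>2\<parallel>\<close>.\<close>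
lemma lipschitz_summable_inverse_b_theta_fps:
  assumes "\<kappa> > 0"
  shows "lipschitz_summable \<Theta> dist\<Theta> (\<lambda>\<theta>. inverse (b_theta_fps p q \<theta>))"
proof -
  let ?c = "\<lambda>\<theta>. inverse (b_theta_fps p q \<theta>)"
  define M where "M = (\<lambda>n. (geometric_fps (1 / (1 + \<kappa>)) ^ q) $ n)"
  define I where "I = (\<lambda>k::nat. if 1 \<le> k \<and> k \<le> q then 1 else (0::real))"
  define U where "U = (\<lambda>n. M n + (Abs_fps M * Abs_fps I * Abs_fps M) $ n)"
  have M: "nonneg_summable M"
    unfolding M_def using assms by (intro nonneg_summable_geometric_fps_power) auto
  have I: "nonneg_summable I" by (rule nonneg_summable_finite_support[of q]) (auto simp: I_def)
  have MIM: "nonneg_summable (\<lambda>n. (Abs_fps M * Abs_fps I * Abs_fps M) $ n)"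
    using nonneg_summable_mult[OF nonneg_summable_mult[OF M I] M] by (simp add: fps_nth_inverse)
  have c_bound: "\<bar>?c \<theta> $ n\<bar> \<le> M n" if "\<theta> \<in> \<Theta>" for \<theta> n
    using that assms inverse_lag_fps_nth_bound[of q "\<lambda>j. \<theta> (p + j)" "1 + \<kappa>" n]
    by (simp add: Theta_kappa_def b_theta_fps_def M_def)
  have "coeffs_majorized \<Theta> dist\<Theta> ?c U"
    unfolding coeffs_majorized_def
  proof (intro conjI ballI allI)
    fix \<theta> n assume "\<theta> \<in> \<Theta>"
    thus "\<bar>?c \<theta> $ n\<bar> \<le> U n"
      using c_bound[of \<theta> n] MIM by (auto simp: U_def nonneg_summable_def intro: add_increasing2)
  next
    fix \<theta>1 \<theta>2 n assume t: "\<theta>1 \<in> \<Theta>" "\<theta>2 \<in> \<Theta>"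
    define D where "D = b_theta_fps p q \<theta>2 - b_theta_fps p q \<theta>1"
    have diff: "?c \<theta>1 - ?c \<theta>2 = ?c \<theta>1 * D * ?c \<theta>2"
      unfolding D_def by (rule fps_inverse_diff) (simp_all add: b_theta_fps_def)
    have D: "\<bar>D $ k\<bar> \<le> dist\<Theta> \<theta>1 \<theta>2 * I k" for k
    proof (cases "1 \<le> k \<and> k \<le> q")
      case True
      hence "\<bar>\<theta>1 (p + k) - \<theta>2 (p + k)\<bar> \<le> dist\<Theta> \<theta>1 \<theta>2"
        by (intro abs_le_param_norm[where f = "\<lambda>k. \<theta>1 k - \<theta>2 k"]) auto
      thus ?thesis using True by (auto simp: D_def b_theta_fps_def I_def abs_minus_commute)
    qed (auto simp: D_def b_theta_fps_def I_def)
    have "\<bar>(?c \<theta>1 * D) $ k\<bar> \<le> (Abs_fps M * Abs_fps (\<lambda>k. dist\<Theta> \<theta>1 \<theta>2 * I k)) $ k" for k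
        using fps_mult_nth_norm_le[of "?c \<theta>1" M D "\<lambda>k. dist\<Theta> \<theta>1 \<theta>2 * I k" k] c_bound t D
      by auto
    hence "\<bar>(?c \<theta>1 * D * ?c \<theta>2) $ n\<bar>
             \<le> (Abs_fps M * Abs_fps (\<lambda>k. dist\<Theta> \<theta>1 \<theta>2 * I k) * Abs_fps M) $ n"
      using fps_mult_nth_norm_le[of "?c \<theta>1 * D"
          "\<lambda>k. (Abs_fps M * Abs_fps (\<lambda>k. dist\<Theta> \<theta>1 \<theta>2 * I k)) $ k" "?c \<theta>2" M n] c_bound t
      by (auto simp: fps_nth_inverse)
    also have "\<dots> = dist\<Theta> \<theta>1 \<theta>2 * (Abs_fps M * Abs_fps I * Abs_fps M) $ n"
    proof -
      have "Abs_fps (\<lambda>k. dist\<Theta> \<theta>1 \<theta>2 * I k) = fps_const (dist\<Theta> \<theta>1 \<theta>2) * Abs_fps I"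
        by (rule fps_ext) simp
      thus ?thesis
        by (simp only: mult.left_commute[of "Abs_fps M"] mult.assoc fps_mult_left_const_nth)
    qed
    also have "\<dots> \<le> U n * dist\<Theta> \<theta>1 \<theta>2"
      using M param_norm_nonneg[of "p + q + 1" "\<lambda>k. \<theta>1 k - \<theta>2 k"]
      by (auto simp: U_def nonneg_summable_def algebra_simps)
    finally show "\<bar>?c \<theta>1 $ n - ?c \<theta>2 $ n\<bar> \<le> U n * dist\<Theta> \<theta>1 \<theta>2"
      by (simp only: diff[symmetric] fps_sub_nth)
  qed
  moreover have "nonneg_summable U" unfolding U_def by (rule nonneg_summable_add[OF M MIM])
  ultimately show ?thesis unfolding lipschitz_summable_def by blast
qed

lemma twice_lipschitz_summable_inverse_b_theta_fps:
  assumes "\<kappa> > 0"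
  shows "twice_lipschitz_summable \<Theta> dist\<Theta> (\<lambda>\<theta>. inverse (b_theta_fps p q \<theta>))"
proof -
  let ?c = "\<lambda>\<theta>. inverse (b_theta_fps p q \<theta>)" and ?E = "ma_direction p q"
  have c: "lipschitz_summable \<Theta> dist\<Theta> ?c"
    by (rule lipschitz_summable_inverse_b_theta_fps[OF assms])
  have E: "lipschitz_summable \<Theta> dist\<Theta> (\<lambda>_. ?E i)" for i
    by (rule lipschitz_summable_finite_support_param[of "p + q"]) (auto simp: ma_direction_def)
  note mult = lipschitz_summable_mult[OF param_norm_nonneg]
  show ?thesis
  proof (rule twice_lipschitz_summableI[where f' = "\<lambda>i \<theta>. ?E i * ?c \<theta> * ?c \<theta>"
        and f'' = "\<lambda>i j \<theta>. ?E j * (?E i * ?c \<theta> * ?c \<theta>) * ?c \<theta> + ?E j * ?c \<theta> * (?E i * ?c \<theta> * ?c \<theta>)"])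
    show "has_coeff_partial i (\<lambda>\<theta>. ?E j * ?c \<theta> * ?c \<theta>)
            (\<lambda>\<theta>. ?E j * (?E i * ?c \<theta> * ?c \<theta>) * ?c \<theta> + ?E j * ?c \<theta> * (?E i * ?c \<theta> * ?c \<theta>))" for i j
      by (rule has_coeff_partial_cong[OF has_coeff_partial_mult[OF has_coeff_partial_mult[OF
            has_coeff_partial_const has_coeff_partial_inverse_b_theta_fps]
            has_coeff_partial_inverse_b_theta_fps]]) simp
  qed (intro has_coeff_partial_inverse_b_theta_fps lipschitz_summable_add mult c E)+
qed

lemma twice_lipschitz_summable_a_theta_fps:
  assumes "\<kappa> > 0"
  shows "twice_lipschitz_summable \<Theta> dist\<Theta> (a_theta_fps p)"
proof (rule twice_lipschitz_summableI[where f' = "\<lambda>i _. - ar_direction p i" and f'' = "\<lambda>_ _ _. 0"])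
  show "has_coeff_partial i (a_theta_fps p) (\<lambda>_. - ar_direction p i)" for i
    by (rule has_coeff_partial_affine) (simp add: a_theta_fps_upd)
  show "lipschitz_summable \<Theta> dist\<Theta> (\<lambda>_. - ar_direction p i)" for i
    by (rule lipschitz_summable_finite_support_param[of p]) (auto simp: ar_direction_def)
  show "has_coeff_partial i (\<lambda>_. - ar_direction p j) (\<lambda>_. 0)" for i j
    by (rule has_coeff_partial_const)
  show "lipschitz_summable \<Theta> dist\<Theta> (\<lambda>_. 0)"
    by (rule lipschitz_summable_finite_support_param[of 0]) simp
qed (rule lipschitz_summable_a_theta_fps[OF assms])

lemma twice_lipschitz_summable_frac_deriv_fps:
  assumes "0 < d1" "d2 \<le> 1/2"
  shows "twice_lipschitz_summable \<Theta> dist\<Theta> (frac_deriv_fps (p + q + 1) 0)"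
proof -
  let ?e = "p + q + 1"
  have F: "lipschitz_summable \<Theta> dist\<Theta> (\<lambda>\<theta>. if P then frac_deriv_fps ?e k \<theta> else 0)"
    if "k \<le> 2" for P k
    using lipschitz_summable_frac_deriv_fps[OF assms that]
      lipschitz_summable_finite_support_param[of 0 0] by (cases P) auto
  show ?thesis
  proof (rule twice_lipschitz_summableI[where f' = "\<lambda>i \<theta>. if i = ?e then frac_deriv_fps ?e 1 \<theta> else 0"
        and f'' = "\<lambda>i j \<theta>. if j = ?e \<and> i = ?e then frac_deriv_fps ?e 2 \<theta> else 0"])
    show "has_coeff_partial i (\<lambda>\<theta>. if j = ?e then frac_deriv_fps ?e 1 \<theta> else 0)
            (\<lambda>\<theta>. if j = ?e \<and> i = ?e then frac_deriv_fps ?e 2 \<theta> else 0)" for i j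
      using has_coeff_partial_frac_deriv_fps[of i ?e 1, unfolded Suc_1]
        has_coeff_partial_const[of i 0]
      by (cases "j = ?e") simp_all
    show "has_coeff_partial i (frac_deriv_fps ?e 0)
            (\<lambda>\<theta>. if i = ?e then frac_deriv_fps ?e 1 \<theta> else 0)" for i
      by (rule has_coeff_partial_frac_deriv_fps[of i ?e 0, unfolded One_nat_def[symmetric]])
    show "lipschitz_summable \<Theta> dist\<Theta> (frac_deriv_fps ?e 0)"
      by (rule lipschitz_summable_frac_deriv_fps[OF assms]) simp
  qed (rule F, simp)+
qed

lemma twice_lipschitz_summable_residual_fps:
  assumes "\<kappa> > 0" "0 < d1" "d2 \<le> 1/2"
  shows "twice_lipschitz_summable \<Theta> dist\<Theta> (residual_fps p q)"
  unfolding residual_fps_def[abs_def]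
  using assms
  by (intro twice_lipschitz_summable_mult[OF param_norm_nonneg]
      twice_lipschitz_summable_inverse_b_theta_fps twice_lipschitz_summable_a_theta_fps
      twice_lipschitz_summable_frac_deriv_fps)

end

section \<open>Second partial derivatives of the criterion\<close>

definition truncated_filter ::
    "((nat \<Rightarrow> real) \<Rightarrow> real fps) \<Rightarrow> (int \<Rightarrow> 'a \<Rightarrow> real) \<Rightarrow> (nat \<Rightarrow> real) \<Rightarrow> nat \<Rightarrow> 'a \<Rightarrow> real" where
  "truncated_filter F X \<theta> t \<omega> = (\<Sum>s=0..<t. F \<theta> $ s * X (int t - int s) \<omega>)"

definition mean_cross ::
    "((nat \<Rightarrow> real) \<Rightarrow> real fps) \<Rightarrow> ((nat \<Rightarrow> real) \<Rightarrow> real fps) \<Rightarrow> (int \<Rightarrow> 'a \<Rightarrow> real)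
       \<Rightarrow> nat \<Rightarrow> (nat \<Rightarrow> real) \<Rightarrow> 'a \<Rightarrow> real" where
  "mean_cross F G X n \<theta> \<omega> =
     (1 / real n) * (\<Sum>t=1..n. truncated_filter F X \<theta> t \<omega> * truncated_filter G X \<theta> t \<omega>)"

lemma Q_n_eq_mean_cross:
  assumes "\<theta> (p + q + 1) \<in> {0<..<1}"
  shows "Q_n p q X n \<theta> \<omega> = mean_cross (residual_fps p q) (residual_fps p q) X n \<theta> \<omega>"
  using assms
  by (simp add: Q_n_def mean_cross_def eps_tilde_def truncated_filter_def power2_eq_square
      gamma_coef_eq_residual_fps)

lemma has_real_derivative_mean_cross:
  assumes "has_coeff_partial j F F'" "has_coeff_partial j G G'"
  shows "((\<lambda>h. mean_cross F G X n (\<theta>(j := h)) \<omega>) has_real_derivative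
           mean_cross F' G X n \<theta> \<omega> + mean_cross F G' X n \<theta> \<omega>) (at (\<theta> j))"
proof -
  have filter: "((\<lambda>h. truncated_filter H X (\<theta>(j := h)) t \<omega>) has_real_derivative
                  truncated_filter H' X \<theta> t \<omega>) (at (\<theta> j))"
    if "has_coeff_partial j H H'" for H H' t
    using that unfolding has_coeff_partial_def truncated_filter_def
    by (intro DERIV_sum DERIV_cmult_right) auto
  have "((\<lambda>h. mean_cross F G X n (\<theta>(j := h)) \<omega>) has_real_derivative
           (1 / real n) * (\<Sum>t=1..n.
              truncated_filter F X (\<theta>(j := \<theta> j)) t \<omega> * truncated_filter G' X \<theta> t \<omega>
              + truncated_filter F' X \<theta> t \<omega> * truncated_filter G X (\<theta>(j := \<theta> j)) t \<omega>))
         (at (\<theta> j))"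
    unfolding mean_cross_def by (intro DERIV_cmult DERIV_sum DERIV_mult' filter assms)
  thus ?thesis by (simp add: mean_cross_def sum.distrib algebra_simps)
qed

text \<open>\<open>Q\<^sub>n\<close> coincides with the mean square of the truncated filter of \<open>residual_fps\<close> only
  where \<open>0 < d < 1\<close>, an open condition on one coordinate; that suffices for partial derivatives.\<close>
lemma partial_cong_coordinate_open:
  assumes "open S" "\<theta> e \<in> S" "\<And>\<theta>'. \<theta>' e \<in> S \<Longrightarrow> f \<theta>' = g \<theta>'"
  shows "partial j f \<theta> = partial j g \<theta>"
proof -
  have "\<forall>\<^sub>F h in nhds (\<theta> j). (\<theta>(j := h)) e \<in> S"
  proof (cases "j = e")
    case True
    thus ?thesis using eventually_nhds_in_open[OF assms(1,2)] by simp
  qed (use assms(2) in simp)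
  hence "\<forall>\<^sub>F h in nhds (\<theta> j). f (\<theta>(j := h)) = g (\<theta>(j := h))"
    by (rule eventually_mono) (rule assms(3))
  thus ?thesis unfolding partial_def by (intro deriv_cong_ev) auto
qed

lemma partial_partial_Q_n:
  assumes "\<theta> (p + q + 1) \<in> {0<..<1}"
    and F': "\<And>i. has_coeff_partial i (residual_fps p q) (F' i)"
    and F'': "\<And>i j. has_coeff_partial i (F' j) (F'' i j)"
  shows "partial i (partial j (\<lambda>\<theta>. Q_n p q X n \<theta> \<omega>)) \<theta>
           = 2 * (mean_cross (F' i) (F' j) X n \<theta> \<omega> + mean_cross (residual_fps p q) (F'' i j) X n \<theta> \<omega>)"
proof -
  let ?F = "residual_fps p q"
  have mean_cross_sym: "mean_cross G H X n \<theta>' \<omega> = mean_cross H G X n \<theta>' \<omega>" for G H \<theta>'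
    by (simp add: mean_cross_def mult.commute)
  have partial_Q: "partial j (\<lambda>\<theta>. Q_n p q X n \<theta> \<omega>) \<theta>' = 2 * mean_cross ?F (F' j) X n \<theta>' \<omega>"
    if "\<theta>' (p + q + 1) \<in> {0<..<1}" for \<theta>'
  proof -
    have "partial j (\<lambda>\<theta>. Q_n p q X n \<theta> \<omega>) \<theta>' = partial j (\<lambda>\<theta>. mean_cross ?F ?F X n \<theta> \<omega>) \<theta>'"
      using that by (intro partial_cong_coordinate_open[where S = "{0<..<1}"] Q_n_eq_mean_cross) auto
    also have "\<dots> = 2 * mean_cross ?F (F' j) X n \<theta>' \<omega>"
      using has_real_derivative_mean_cross[OF F'[of j] F'[of j], of X n \<theta>' \<omega>]
      by (simp add: partial_def DERIV_imp_deriv mean_cross_sym[of "F' j"])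
    finally show ?thesis .
  qed
  have "partial i (partial j (\<lambda>\<theta>. Q_n p q X n \<theta> \<omega>)) \<theta>
          = partial i (\<lambda>\<theta>. 2 * mean_cross ?F (F' j) X n \<theta> \<omega>) \<theta>"
    using assms(1) partial_Q by (intro partial_cong_coordinate_open[where S = "{0<..<1}"]) auto
  also have "\<dots> = 2 * (mean_cross (F' i) (F' j) X n \<theta> \<omega> + mean_cross ?F (F'' i j) X n \<theta> \<omega>)"
    unfolding partial_def
    by (intro DERIV_imp_deriv DERIV_cmult has_real_derivative_mean_cross[of i, simplified] F' F'')
  finally show ?thesis .
qed

section \<open>The random Lipschitz constant\<close>

definition weighted_energy :: "(nat \<Rightarrow> real) \<Rightarrow> (int \<Rightarrow> 'a \<Rightarrow> real) \<Rightarrow> nat \<Rightarrow> 'a \<Rightarrow> real" where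
  "weighted_energy W X n \<omega> = (\<Sum>t=1..n. \<Sum>s=0..<t. W s * (X (int t - int s) \<omega>)\<^sup>2)"

lemma abs_sum_mult_le:
  fixes c W x :: "nat \<Rightarrow> real"
  assumes "\<And>s. s \<in> A \<Longrightarrow> \<bar>c s\<bar> \<le> W s * K" "K \<ge> 0"
  shows "\<bar>\<Sum>s\<in>A. c s * x s\<bar> \<le> K * (\<Sum>s\<in>A. W s * \<bar>x s\<bar>)"
proof -
  have "\<bar>\<Sum>s\<in>A. c s * x s\<bar> \<le> (\<Sum>s\<in>A. \<bar>c s\<bar> * \<bar>x s\<bar>)"
    unfolding abs_mult[symmetric] by (rule sum_abs)
  also have "\<dots> \<le> (\<Sum>s\<in>A. K * (W s * \<bar>x s\<bar>))"
  proof (rule sum_mono)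
    fix s assume "s \<in> A"
    hence "\<bar>c s\<bar> * \<bar>x s\<bar> \<le> (W s * K) * \<bar>x s\<bar>" using assms(1) by (intro mult_right_mono) auto
    thus "\<bar>c s\<bar> * \<bar>x s\<bar> \<le> K * (W s * \<bar>x s\<bar>)" by (simp add: mult_ac)
  qed
  finally show ?thesis by (simp add: sum_distrib_left)
qed

text \<open>Via \<open>A\<^sub>1B\<^sub>1 - A\<^sub>2B\<^sub>2 = (A\<^sub>1 - A\<^sub>2)B\<^sub>1 + A\<^sub>2(B\<^sub>1 - B\<^sub>2)\<close>.\<close>
lemma abs_diff_mult_sums_le:
  fixes a1 a2 b1 b2 W x :: "nat \<Rightarrow> real"
  assumes "\<And>s. s \<in> A \<Longrightarrow> \<bar>a2 s\<bar> \<le> W s" "\<And>s. s \<in> A \<Longrightarrow> \<bar>b1 s\<bar> \<le> W s"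
    and "\<And>s. s \<in> A \<Longrightarrow> \<bar>a1 s - a2 s\<bar> \<le> W s * K" "\<And>s. s \<in> A \<Longrightarrow> \<bar>b1 s - b2 s\<bar> \<le> W s * K"
    and "K \<ge> 0"
  shows "\<bar>(\<Sum>s\<in>A. a1 s * x s) * (\<Sum>s\<in>A. b1 s * x s) - (\<Sum>s\<in>A. a2 s * x s) * (\<Sum>s\<in>A. b2 s * x s)\<bar>
           \<le> 2 * K * (\<Sum>s\<in>A. W s * \<bar>x s\<bar>)\<^sup>2"
proof -
  define S where "S = (\<Sum>s\<in>A. W s * \<bar>x s\<bar>)"
  define A1 A2 B1 B2 where "A1 = (\<Sum>s\<in>A. a1 s * x s)" and "A2 = (\<Sum>s\<in>A. a2 s * x s)"
    and "B1 = (\<Sum>s\<in>A. b1 s * x s)" and "B2 = (\<Sum>s\<in>A. b2 s * x s)"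
  have "\<bar>A2\<bar> \<le> S" "\<bar>B1\<bar> \<le> S"
    using abs_sum_mult_le[of A a2 W 1 x] abs_sum_mult_le[of A b1 W 1 x] assms(1,2)
    by (simp_all add: A2_def B1_def S_def)
  moreover have "\<bar>A1 - A2\<bar> \<le> K * S" "\<bar>B1 - B2\<bar> \<le> K * S"
    using abs_sum_mult_le[of A "\<lambda>s. a1 s - a2 s" W K x] abs_sum_mult_le[of A "\<lambda>s. b1 s - b2 s" W K x]
      assms(3-5)
    by (simp_all add: A1_def A2_def B1_def B2_def S_def sum_subtractf left_diff_distrib)
  moreover have "0 \<le> S" using \<open>\<bar>A2\<bar> \<le> S\<close> by linarith
  ultimately have "\<bar>A1 - A2\<bar> * \<bar>B1\<bar> + \<bar>A2\<bar> * \<bar>B1 - B2\<bar> \<le> (K * S) * S + S * (K * S)"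
    using assms(5) by (intro add_mono mult_mono) auto
  moreover have "A1 * B1 - A2 * B2 = (A1 - A2) * B1 + A2 * (B1 - B2)" by (simp add: algebra_simps)
  hence "\<bar>A1 * B1 - A2 * B2\<bar> \<le> \<bar>A1 - A2\<bar> * \<bar>B1\<bar> + \<bar>A2\<bar> * \<bar>B1 - B2\<bar>"
    by (simp add: abs_mult[symmetric] abs_triangle_ineq)
  ultimately show ?thesis unfolding A1_def A2_def B1_def B2_def S_def
    by (simp add: power2_eq_square algebra_simps)
qed

lemma weighted_Cauchy_Schwarz:
  fixes w x :: "nat \<Rightarrow> real"
  assumes "\<And>s. 0 \<le> w s"
  shows "(\<Sum>s\<in>A. w s * \<bar>x s\<bar>)\<^sup>2 \<le> (\<Sum>s\<in>A. w s) * (\<Sum>s\<in>A. w s * (x s)\<^sup>2)"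
  using Cauchy_Schwarz_ineq_sum[of "\<lambda>s. sqrt (w s)" "\<lambda>s. sqrt (w s) * \<bar>x s\<bar>" A] assms
  by (simp add: power_mult_distrib mult.assoc[symmetric])

lemma mean_cross_lipschitz:
  assumes W: "nonneg_summable W" and F: "coeffs_majorized T N F W" and G: "coeffs_majorized T N G W"
    and \<theta>: "\<theta>1 \<in> T" "\<theta>2 \<in> T" and N: "N \<theta>1 \<theta>2 \<ge> 0"
  shows "\<bar>mean_cross F G X n \<theta>1 \<omega> - mean_cross F G X n \<theta>2 \<omega>\<bar>
           \<le> 2 * suminf W / real n * weighted_energy W X n \<omega> * N \<theta>1 \<theta>2"
proof -
  define Y where "Y = (\<lambda>t. \<Sum>s=0..<t. W s * (X (int t - int s) \<omega>)\<^sup>2)"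
  have W0: "0 \<le> W s" for s using W by (simp add: nonneg_summable_def)
  have summand: "\<bar>truncated_filter F X \<theta>1 t \<omega> * truncated_filter G X \<theta>1 t \<omega>
                - truncated_filter F X \<theta>2 t \<omega> * truncated_filter G X \<theta>2 t \<omega>\<bar>
              \<le> 2 * N \<theta>1 \<theta>2 * suminf W * Y t" for t
  proof -
    have "\<bar>truncated_filter F X \<theta>1 t \<omega> * truncated_filter G X \<theta>1 t \<omega>
            - truncated_filter F X \<theta>2 t \<omega> * truncated_filter G X \<theta>2 t \<omega>\<bar>
          \<le> 2 * N \<theta>1 \<theta>2 * (\<Sum>s=0..<t. W s * \<bar>X (int t - int s) \<omega>\<bar>)\<^sup>2"
      unfolding truncated_filter_def
      using F G \<theta> N by (intro abs_diff_mult_sums_le) (auto simp: coeffs_majorized_def)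
    also have "\<dots> \<le> 2 * N \<theta>1 \<theta>2 * ((\<Sum>s<t. W s) * Y t)"
      using weighted_Cauchy_Schwarz[of W "\<lambda>s. X (int t - int s) \<omega>" "{0..<t}", OF W0] N
      by (intro mult_left_mono) (auto simp: Y_def atLeast0LessThan)
    also have "\<dots> \<le> 2 * N \<theta>1 \<theta>2 * (suminf W * Y t)"
      using W N W0 unfolding nonneg_summable_def Y_def
      by (intro mult_left_mono mult_right_mono sum_le_suminf sum_nonneg) auto
    finally show ?thesis by simp
  qed
  have "\<bar>\<Sum>t=1..n. truncated_filter F X \<theta>1 t \<omega> * truncated_filter G X \<theta>1 t \<omega>
            - truncated_filter F X \<theta>2 t \<omega> * truncated_filter G X \<theta>2 t \<omega>\<bar>
          \<le> (\<Sum>t=1..n. 2 * N \<theta>1 \<theta>2 * suminf W * Y t)"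
    by (intro order_trans[OF sum_abs sum_mono] summand)
  hence "\<bar>mean_cross F G X n \<theta>1 \<omega> - mean_cross F G X n \<theta>2 \<omega>\<bar>
           \<le> (1 / real n) * (\<Sum>t=1..n. 2 * N \<theta>1 \<theta>2 * suminf W * Y t)"
    unfolding mean_cross_def right_diff_distrib[symmetric] sum_subtractf[symmetric] abs_mult
    by (simp add: divide_right_mono)
  also have "\<dots> = 2 * suminf W / real n * weighted_energy W X n \<omega> * N \<theta>1 \<theta>2"
    by (simp add: weighted_energy_def Y_def sum_distrib_left[symmetric] algebra_simps)
  finally show ?thesis .
qed

lemma abs_diff_double_sums_le:
  fixes a1 a2 b1 b2 K :: real
  assumes "\<bar>a1 - a2\<bar> \<le> K" "\<bar>b1 - b2\<bar> \<le> K"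
  shows "\<bar>2 * (a1 + b1) - 2 * (a2 + b2)\<bar> \<le> 4 * K"
  using assms by (simp add: abs_le_iff)

lemma partial_partial_Q_n_lipschitz:
  assumes F': "\<And>i. has_coeff_partial i (residual_fps p q) (F' i)"
    and F'': "\<And>i j. has_coeff_partial i (F' j) (F'' i j)"
    and W: "nonneg_summable W" and maj: "coeffs_majorized T N (residual_fps p q) W"
      "coeffs_majorized T N (F' i) W" "coeffs_majorized T N (F' j) W"
      "coeffs_majorized T N (F'' i j) W"
    and T: "T \<subseteq> {\<theta>. \<theta> (p + q + 1) \<in> {0<..<1}}"
    and \<theta>: "\<theta>1 \<in> T" "\<theta>2 \<in> T" and N: "N \<theta>1 \<theta>2 \<ge> 0"
  shows "\<bar>partial i (partial j (\<lambda>\<theta>. Q_n p q X n \<theta> \<omega>)) \<theta>1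
           - partial i (partial j (\<lambda>\<theta>. Q_n p q X n \<theta> \<omega>)) \<theta>2\<bar>
         \<le> 8 * suminf W / real n * weighted_energy W X n \<omega> * N \<theta>1 \<theta>2"
proof -
  define K where "K = 2 * suminf W / real n * weighted_energy W X n \<omega> * N \<theta>1 \<theta>2"
  have d: "\<theta>1 (p + q + 1) \<in> {0<..<1}" "\<theta>2 (p + q + 1) \<in> {0<..<1}" using T \<theta> by auto
  have "\<bar>partial i (partial j (\<lambda>\<theta>. Q_n p q X n \<theta> \<omega>)) \<theta>1
          - partial i (partial j (\<lambda>\<theta>. Q_n p q X n \<theta> \<omega>)) \<theta>2\<bar>
        = \<bar>2 * (mean_cross (F' i) (F' j) X n \<theta>1 \<omega> + mean_cross (residual_fps p q) (F'' i j) X n \<theta>1 \<omega>)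
           - 2 * (mean_cross (F' i) (F' j) X n \<theta>2 \<omega> + mean_cross (residual_fps p q) (F'' i j) X n \<theta>2 \<omega>)\<bar>"
    by (simp only: partial_partial_Q_n[where \<theta> = \<theta>1, OF d(1) F' F'']
        partial_partial_Q_n[where \<theta> = \<theta>2, OF d(2) F' F''])
  also have "\<dots> \<le> 4 * K"
    unfolding K_def
    by (intro abs_diff_double_sums_le mean_cross_lipschitz[OF W maj(2,3) \<theta> N]
        mean_cross_lipschitz[OF W maj(1,4) \<theta> N])
  also have "4 * K = 8 * suminf W / real n * weighted_energy W X n \<omega> * N \<theta>1 \<theta>2"
    by (simp add: K_def)
  finally show ?thesis .
qed

lemma bounded_in_probability_of_expectation_bounded:
  assumes "prob_space M" and Y: "\<And>n. integrable M (Y n)" "\<And>n \<omega>. 0 \<le> Y n \<omega>"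
    and bound: "\<And>n. n \<ge> 1 \<Longrightarrow> integral\<^sup>L M (Y n) \<le> B"
  shows "bounded_in_probability M Y"
  unfolding bounded_in_probability_def
proof (intro allI impI)
  interpret prob_space M by (rule assms(1))
  fix e :: real assume "e > 0"
  have "0 \<le> integral\<^sup>L M (Y 1)" using Y(2) by (simp add: integral_nonneg_AE)
  hence "0 \<le> B" using bound[of 1] by linarith
  define K where "K = B / e + 1"
  have "K > 0" using \<open>0 \<le> B\<close> \<open>e > 0\<close> by (simp add: K_def add_nonneg_pos)
  show "\<exists>K. \<forall>n\<ge>1. measure M {\<omega> \<in> space M. K < \<bar>Y n \<omega>\<bar>} < e"
  proof (intro exI allI impI)
    fix n :: nat assume "n \<ge> 1"
    have "measure M {\<omega> \<in> space M. K < \<bar>Y n \<omega>\<bar>} \<le> measure M {\<omega> \<in> space M. Y n \<omega> \<ge> K}"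
      using Y by (intro finite_measure_mono) auto
    also have "\<dots> \<le> integral\<^sup>L M (Y n) / K"
      using Y \<open>K > 0\<close> by (intro integral_Markov_inequality_measure[where A = "space M"]) auto
    also have "\<dots> \<le> B / K" using bound[OF \<open>n \<ge> 1\<close>] \<open>K > 0\<close> by (intro divide_right_mono) auto
    also have "\<dots> < e" using \<open>K > 0\<close> \<open>e > 0\<close> \<open>0 \<le> B\<close> by (simp add: K_def field_simps)
    finally show "measure M {\<omega> \<in> space M. K < \<bar>Y n \<omega>\<bar>} < e" .
  qed
qed

text \<open>\<open>E (weighted_energy W X n) \<le> n (\<Sum>W) m\<close>; Markov's inequality does the rest.\<close>
lemma bounded_in_probability_scaled_weighted_energy:
  fixes M :: "'a measure" and X :: "int \<Rightarrow> 'a \<Rightarrow> real"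
  assumes M: "prob_space M" and X: "\<And>t. X t \<in> borel_measurable M"
    and X_L2: "\<And>t. integrable M (\<lambda>\<omega>. (X t \<omega>)\<^sup>2)" and X_var: "\<And>t. integral\<^sup>L M (\<lambda>\<omega>. (X t \<omega>)\<^sup>2) = m"
    and W: "nonneg_summable W" and C: "0 \<le> C"
  shows "(\<forall>n. (\<lambda>\<omega>. C / real n * weighted_energy W X n \<omega>) \<in> borel_measurable M)
         \<and> bounded_in_probability M (\<lambda>n \<omega>. C / real n * weighted_energy W X n \<omega>)"
proof
  interpret prob_space M by (rule M)
  note [measurable] = X
  show "\<forall>n. (\<lambda>\<omega>. C / real n * weighted_energy W X n \<omega>) \<in> borel_measurable M"
    unfolding weighted_energy_def by measurable
  have W0: "0 \<le> W s" for s using W by (simp add: nonneg_summable_def)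
  have "0 \<le> integral\<^sup>L M (\<lambda>\<omega>. (X 0 \<omega>)\<^sup>2)" by (simp add: integral_nonneg_AE)
  hence m: "0 \<le> m" using X_var[of 0] by simp
  have int: "integrable M (\<lambda>\<omega>. \<Sum>s=0..<t. W s * (X (int t - int s) \<omega>)\<^sup>2)" for t
    by (intro Bochner_Integration.integrable_sum Bochner_Integration.integrable_mult_right X_L2)
  have "integral\<^sup>L M (\<lambda>\<omega>. C / real n * weighted_energy W X n \<omega>) \<le> C * suminf W * m" if "n \<ge> 1" for n
  proof -
    have "integral\<^sup>L M (weighted_energy W X n) = (\<Sum>t=1..n. (\<Sum>s<t. W s) * m)"
      unfolding weighted_energy_def
      by (simp add: int X_L2 X_var sum_distrib_right atLeast0LessThan)
    also have "\<dots> \<le> (\<Sum>t=1..n. suminf W * m)"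
      using W m by (intro sum_mono mult_right_mono sum_le_suminf) (auto simp: nonneg_summable_def)
    finally have "integral\<^sup>L M (weighted_energy W X n) \<le> real n * suminf W * m" by simp
    hence "C / real n * integral\<^sup>L M (weighted_energy W X n) \<le> C / real n * (real n * suminf W * m)"
      using C by (intro mult_left_mono) auto
    thus ?thesis using that by simp
  qed
  moreover have "0 \<le> C / real n * weighted_energy W X n \<omega>" for n \<omega>
    using C W0 unfolding weighted_energy_def by (intro mult_nonneg_nonneg sum_nonneg) auto
  ultimately show "bounded_in_probability M (\<lambda>n \<omega>. C / real n * weighted_energy W X n \<omega>)"
    using int unfolding weighted_energy_def
    by (intro bounded_in_probability_of_expectation_bounded[OF M]) auto
qed

theorem proposition1:
  fixes M :: "'w measure" and X \<epsilon> :: "int \<Rightarrow> 'w \<Rightarrow> real"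
    and a b :: "nat \<Rightarrow> real" and p q :: nat
    and d0 \<sigma>2 \<kappa> d1 d2 :: real
  assumes M: "prob_space M"
    and d0: "0 < d0" "d0 < 1/2"
    and eps_meas: "\<And>t. \<epsilon> t \<in> borel_measurable M"
    and eps_L2: "\<And>t. integrable M (\<lambda>\<omega>. (\<epsilon> t \<omega>)\<^sup>2)"
    and eps_mean: "\<And>t. integral\<^sup>L M (\<epsilon> t) = 0"
    and eps_var: "\<sigma>2 > 0" "\<And>t. integral\<^sup>L M (\<lambda>\<omega>. (\<epsilon> t \<omega>)\<^sup>2) = \<sigma>2"
    and eps_uncorr: "\<And>s t. s \<noteq> t \<Longrightarrow> integral\<^sup>L M (\<lambda>\<omega>. \<epsilon> s \<omega> * \<epsilon> t \<omega>) = 0"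
    and X_meas: "\<And>t. X t \<in> borel_measurable M"
    and X_L2: "\<And>t. integrable M (\<lambda>\<omega>. (X t \<omega>)\<^sup>2)"
    and X_mean_stat: "\<And>s t. integral\<^sup>L M (X s) = integral\<^sup>L M (X t)"
    and X_cov_stat: "\<And>s t h. integral\<^sup>L M (\<lambda>\<omega>. X (s + h) \<omega> * X s \<omega>)
                             = integral\<^sup>L M (\<lambda>\<omega>. X (t + h) \<omega> * X t \<omega>)"
    and a_roots: "\<And>z. cmod z \<le> 1 \<Longrightarrow> lag_poly p a z \<noteq> 0"
    and b_roots: "\<And>z. cmod z \<le> 1 \<Longrightarrow> lag_poly q b z \<noteq> 0"
    and no_common: "\<And>z. \<not> (lag_poly p a z = 0 \<and> lag_poly q b z = 0)"
    and farima: "\<And>t. AE \<omega> in M.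
         (\<forall>k. summable (\<lambda>j. frac_alpha j d0 * X (t - int k - int j) \<omega>)) \<and>
         frac_diff d0 X t \<omega> - (\<Sum>i=1..p. a i * frac_diff d0 X (t - int i) \<omega>)
           = \<epsilon> t \<omega> - (\<Sum>j=1..q. b j * \<epsilon> (t - int j) \<omega>)"
    and \<kappa>: "\<kappa> > 0"
    and d12: "0 < d1" "d1 \<le> d2" "d2 < 1/2"
  shows "\<exists>\<Delta> :: nat \<Rightarrow> 'w \<Rightarrow> real.
           (\<forall>n. \<Delta> n \<in> borel_measurable M) \<and>
           bounded_in_probability M \<Delta> \<and>
           (\<forall>n\<ge>1. \<forall>\<omega>\<in>space M. \<forall>i\<in>{1..p+q+1}. \<forall>j\<in>{1..p+q+1}.
              \<forall>\<theta>1\<in>Theta_kappa p q \<kappa> d1 d2. \<forall>\<theta>2\<in>Theta_kappa p q \<kappa> d1 d2.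
                \<bar>partial i (partial j (\<lambda>\<theta>. Q_n p q X n \<theta> \<omega>)) \<theta>1
                 - partial i (partial j (\<lambda>\<theta>. Q_n p q X n \<theta> \<omega>)) \<theta>2\<bar>
                \<le> \<Delta> n \<omega> * param_norm (p + q + 1) (\<lambda>k. \<theta>1 k - \<theta>2 k))"
proof -
  let ?T = "Theta_kappa p q \<kappa> d1 d2" and ?N = "param_dist (p + q + 1)" and ?R = "{1..p + q + 1}"
  have "twice_lipschitz_summable ?T ?N (residual_fps p q)"
    using d12 by (intro twice_lipschitz_summable_residual_fps[OF \<kappa>]) auto
  then obtain F' F'' W where F': "\<And>i. has_coeff_partial i (residual_fps p q) (F' i)"
    and F'': "\<And>i j. has_coeff_partial i (F' j) (F'' i j)" and W: "nonneg_summable W"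
    and maj: "coeffs_majorized ?T ?N (residual_fps p q) W"
      "\<And>i. i \<in> ?R \<Longrightarrow> coeffs_majorized ?T ?N (F' i) W"
      "\<And>i j. i \<in> ?R \<Longrightarrow> j \<in> ?R \<Longrightarrow> coeffs_majorized ?T ?N (F'' i j) W"
    by (rule twice_lipschitz_summable_common_majorant[OF _ finite_atLeastAtMost[of 1 "p + q + 1"]
          param_norm_nonneg]) blast
  define \<Delta> where "\<Delta> = (\<lambda>n \<omega>. 8 * suminf W / real n * weighted_energy W X n \<omega>)"
  have "integral\<^sup>L M (\<lambda>\<omega>. (X t \<omega>)\<^sup>2) = integral\<^sup>L M (\<lambda>\<omega>. (X 0 \<omega>)\<^sup>2)" for t
    using X_cov_stat[of t 0 0] by (simp add: power2_eq_square)
  moreover have "0 \<le> 8 * suminf W" using W by (simp add: nonneg_summable_def suminf_nonneg)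
  ultimately have bounded: "(\<forall>n. \<Delta> n \<in> borel_measurable M) \<and> bounded_in_probability M \<Delta>"
    unfolding \<Delta>_def by (intro bounded_in_probability_scaled_weighted_energy[OF M X_meas X_L2 _ W])
  have d: "?T \<subseteq> {\<theta>. \<theta> (p + q + 1) \<in> {0<..<1}}"
    using d12 by (auto simp: Theta_kappa_def)
  have lipschitz: "\<bar>partial i (partial j (\<lambda>\<theta>. Q_n p q X n \<theta> \<omega>)) \<theta>1
           - partial i (partial j (\<lambda>\<theta>. Q_n p q X n \<theta> \<omega>)) \<theta>2\<bar> \<le> \<Delta> n \<omega> * ?N \<theta>1 \<theta>2"
    if "i \<in> ?R" "j \<in> ?R" "\<theta>1 \<in> ?T" "\<theta>2 \<in> ?T" for n \<omega> i j \<theta>1 \<theta>2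
    unfolding \<Delta>_def
    by (rule partial_partial_Q_n_lipschitz[OF F' F'' W maj(1)
          maj(2)[OF that(1)] maj(2)[OF that(2)] maj(3)[OF that(1,2)] d that(3,4)])
      (simp add: param_norm_nonneg)
  show ?thesis using bounded lipschitz by blast
qed

end
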